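(* Consider the Gaussian location model in the context with loss $\ell(w,z)=|w-z|$ (1-Lipschitz in $w$ for the metric $|\cdot|$), hypothesis $W=\frac{1}{N_L}\sum_{i_{1:L}}\mu_L^{i_{1:L}}$ computed on the selected tree of the supersample construction. Then for every depth $l\in\{1,\dots,L\}$ and every index $i_{1:l}$, $$\mathbb{E}_{\tilde\mu_l^{i_{1:l}},U_l^{i_{1:l}}}\,\mathbb{W}\Big(P_{W\mid\tilde\mu_l^{i_{1:l}},U_l^{i_{1:l}}},P_{W\mid\tilde\mu_l^{i_{1:l}}}\Big)\le\frac{\sigma_l}{\sqrt{\pi}\,N_l},$$ where $\mathbb{W}$ is the Wasserstein-1 distance on $\mathbb R$; consequently the bound $2\sum_{l=1}^L\frac1{N_l}\sum_{i_{1:l}}\mathbb{E}\,\mathbb{W}(\cdot,\cdot)$ is at most $\frac{2}{\sqrt\pi}\sum_{l=1}^L\frac{\sigma_l}{N_l}$, and $\mathbb{E}[L(W)-\hat L(W,\mu)]\le\frac{2}{\sqrt\pi}\sum_{l=1}^L\frac{\sigma_l}{N_l}$.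
   Context: Gaussian location model. Fix $L\ge1$, branching factors $n_1,\dots,n_L\ge1$, $N_l=\prod_{k=1}^l n_k$, $\theta\in\mathbb R$ and $\sigma_1^2,\dots,\sigma_L^2>0$. Real-valued nodes: $\mu_1^{i_1}\sim\mathcal N(\theta,\sigma_1^2)$ i.i.d.; for $l\ge2$, conditionally independently $\mu_l^{i_{1:l}}\sim\mathcal N(\mu_{l-1}^{i_{1:l-1}},\sigma_l^2)$; leaves $\mu_L^{i_{1:L}}$ are data points. $L(w)=\mathbb{E}|w-Z|$ with $Z$ a fresh leaf generated independently by the same mechanism; $\hat L(w,\mu)=\frac1{N_L}\sum|w-\mu_L^{i_{1:L}}|$. Supersample construction. Independent uniform $U_l^{i_{1:l}}\in\{1,2\}$ for every node. $\tilde\mu_1^{i_1}=(\mu_{1,1}^{i_1},\mu_{1,2}^{i_1})$ with components i.i.d. $\mathcal N(\theta,\sigma_1^2)$; for $l\ge2$, $\tilde\mu_l^{i_{1:l}}=(\mu_{l,1}^{i_{1:l}},\mu_{l,2}^{i_{1:l}})$ with components conditionally i.i.d. $\mathcal N(\mu_{l-1,U_{l-1}^{i_{1:l-1}}}^{i_{1:l-1}},\sigma_l^2)$, independently across nodes. The selected nodes $\mu_l^{i_{1:l}}:=\mu_{l,U_l^{i_{1:l}}}^{i_{1:l}}$ form the training tree (with the law of the Gaussian location model) on which $W$ is computed. $P_{W\mid\tilde\mu_l^{i_{1:l}},U_l^{i_{1:l}}}$ and $P_{W\mid\tilde\mu_l^{i_{1:l}}}$ are conditional laws of $W$. *)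

theory Defs
  imports "HOL-Probability.Probability"
begin

text \<open>Indices i_{1:l} at depth l: lists of length l with i_k < n_k (0-based entries).\<close>
definition idx :: "(nat \<Rightarrow> nat) \<Rightarrow> nat \<Rightarrow> nat list set" where
  "idx n l = {is. length is = l \<and> (\<forall>k<l. is ! k < n (Suc k))}"

definition NN :: "(nat \<Rightarrow> nat) \<Rightarrow> nat \<Rightarrow> nat" where
  "NN n l = (\<Prod>k\<in>{1..l}. n k)"

definition nodes :: "(nat \<Rightarrow> nat) \<Rightarrow> nat \<Rightarrow> (nat \<times> nat list) set" where
  "nodes n L = {(l, is). 1 \<le> l \<and> l \<le> L \<and> is \<in> idx n l}"

text \<open>An outcome is a pair (xi, U): xi((l,i),j) is an i.i.d. standard normal noise for
  component j \<in> {1,2} of node (l,i); U(l,i) \<in> {1,2} is the uniform selector of node (l,i).\<close>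
type_synonym outcome = "(((nat \<times> nat list) \<times> nat) \<Rightarrow> real) \<times> ((nat \<times> nat list) \<Rightarrow> nat)"

definition supersample_space :: "(nat \<Rightarrow> nat) \<Rightarrow> nat \<Rightarrow> outcome measure" where
  "supersample_space n L =
     (PiM (nodes n L \<times> {1,2}) (\<lambda>_. density lborel std_normal_density))
     \<Otimes>\<^sub>M (PiM (nodes n L) (\<lambda>_. measure_pmf (pmf_of_set {1,2})))"

text \<open>Supersample node components mu_{l,j}^{i_{1:l}}: mu_{1,j} = theta + sigma_1 xi,
  mu_{l,j}^{i} = mu_{l-1,U_{l-1}^{parent}}^{parent} + sigma_l xi, i.e. conditionally
  N(mu_{l-1,U}^{parent}, sigma_l^2), independently across nodes and components.\<close>
fun mutil :: "real \<Rightarrow> (nat \<Rightarrow> real) \<Rightarrow> outcome \<Rightarrow> nat \<Rightarrow> nat list \<Rightarrow> nat \<Rightarrow> real" where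
  "mutil \<theta> \<sigma> \<omega> 0 is j = \<theta>"
| "mutil \<theta> \<sigma> \<omega> (Suc l) is j =
     (if l = 0 then \<theta> else mutil \<theta> \<sigma> \<omega> l (take l is) (snd \<omega> (l, take l is)))
     + \<sigma> (Suc l) * fst \<omega> ((Suc l, is), j)"

definition musel :: "real \<Rightarrow> (nat \<Rightarrow> real) \<Rightarrow> outcome \<Rightarrow> nat \<Rightarrow> nat list \<Rightarrow> real" where
  "musel \<theta> \<sigma> \<omega> l is = mutil \<theta> \<sigma> \<omega> l is (snd \<omega> (l, is))"

definition hypW :: "(nat \<Rightarrow> nat) \<Rightarrow> nat \<Rightarrow> real \<Rightarrow> (nat \<Rightarrow> real) \<Rightarrow> outcome \<Rightarrow> real" where
  "hypW n L \<theta> \<sigma> \<omega> = (1 / real (NN n L)) * (\<Sum>is\<in>idx n L. musel \<theta> \<sigma> \<omega> L is)"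

definition XU :: "real \<Rightarrow> (nat \<Rightarrow> real) \<Rightarrow> nat \<Rightarrow> nat list \<Rightarrow> outcome \<Rightarrow> (real \<times> real) \<times> nat" where
  "XU \<theta> \<sigma> l is \<omega> = ((mutil \<theta> \<sigma> \<omega> l is 1, mutil \<theta> \<sigma> \<omega> l is 2), snd \<omega> (l, is))"

definition XT :: "real \<Rightarrow> (nat \<Rightarrow> real) \<Rightarrow> nat \<Rightarrow> nat list \<Rightarrow> outcome \<Rightarrow> real \<times> real" where
  "XT \<theta> \<sigma> l is \<omega> = (mutil \<theta> \<sigma> \<omega> l is 1, mutil \<theta> \<sigma> \<omega> l is 2)"

definition SXU :: "((real \<times> real) \<times> nat) measure" where
  "SXU = (borel \<Otimes>\<^sub>M borel) \<Otimes>\<^sub>M count_space UNIV"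

definition SXT :: "(real \<times> real) measure" where
  "SXT = borel \<Otimes>\<^sub>M borel"

definition is_cond_law ::
  "'a measure \<Rightarrow> 'b measure \<Rightarrow> ('a \<Rightarrow> 'b) \<Rightarrow> ('a \<Rightarrow> real) \<Rightarrow> ('b \<Rightarrow> real measure) \<Rightarrow> bool" where
  "is_cond_law M S X Z \<kappa> \<longleftrightarrow>
     \<kappa> \<in> S \<rightarrow>\<^sub>M prob_algebra borel \<and>
     (\<forall>A\<in>sets S. \<forall>B\<in>sets borel.
        emeasure M {\<omega>\<in>space M. X \<omega> \<in> A \<and> Z \<omega> \<in> B}
        = (\<integral>\<^sup>+ x. indicator A x * emeasure (\<kappa> x) B \<partial>(distr M S X)))"

definition couplings :: "real measure \<Rightarrow> real measure \<Rightarrow> (real \<times> real) measure set" where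
  "couplings P Q = {\<pi>. sets \<pi> = sets (borel \<Otimes>\<^sub>M borel) \<and> prob_space \<pi> \<and>
       distr \<pi> borel fst = P \<and> distr \<pi> borel snd = Q}"

definition wasserstein1 :: "real measure \<Rightarrow> real measure \<Rightarrow> ennreal" where
  "wasserstein1 P Q = (INF \<pi>\<in>couplings P Q. \<integral>\<^sup>+ z. ennreal \<bar>fst z - snd z\<bar> \<partial>\<pi>)"

text \<open>Population loss L(w) = E|w - Z|, Z a fresh leaf generated by the same mechanism
  (its law is the law of any leaf of the tree, e.g. the leaf (0,...,0)).\<close>
definition popLoss :: "(nat \<Rightarrow> nat) \<Rightarrow> nat \<Rightarrow> real \<Rightarrow> (nat \<Rightarrow> real) \<Rightarrow> real \<Rightarrow> real" where
  "popLoss n L \<theta> \<sigma> w =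
     (\<integral> z. \<bar>w - z\<bar> \<partial>(distr (supersample_space n L) borel (\<lambda>\<omega>. musel \<theta> \<sigma> \<omega> L (replicate L 0))))"

definition empLoss :: "(nat \<Rightarrow> nat) \<Rightarrow> nat \<Rightarrow> real \<Rightarrow> (nat \<Rightarrow> real) \<Rightarrow> real \<Rightarrow> outcome \<Rightarrow> real" where
  "empLoss n L \<theta> \<sigma> w \<omega> = (1 / real (NN n L)) * (\<Sum>is\<in>idx n L. \<bar>w - musel \<theta> \<sigma> \<omega> L is\<bar>)"

end

theory Submission
  imports Defs
begin

text \<open>
  Flipping the selector \<open>U\<^sub>c\<close> of a node \<open>c = (l, i)\<close> preserves the law of the supersample,
  keeps the pair of node values at \<open>c\<close>, and moves \<open>W\<close> by
  \<open>\<plusminus>\<sigma>\<^sub>l (\<xi>\<^sub>c\<^sub>2 - \<xi>\<^sub>c\<^sub>1) / N\<^sub>l\<close>, since exactly \<open>N\<^sub>L / N\<^sub>l\<close> training leaves descend from \<open>c\<close>.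
  Hence the conditional law of \<open>W\<close> given the pair and \<open>U\<^sub>c = 2\<close> is the translate of the one
  given the pair and \<open>U\<^sub>c = 1\<close>, and the law given the pair alone is the fair mixture of the two.
  Coupling each of them with the mixture bounds their Wasserstein distance to it by half the
  translation, and \<open>E \<bar>\<xi>\<^sub>1 - \<xi>\<^sub>2\<bar> = 2 / sqrt pi\<close> for independent standard Gaussians.

  For the generalisation gap, fix a training leaf and replace the selected noise of its ancestors
  by the unselected one, level by level from the leaves upwards. Each replacement is a selector
  flip and raises \<open>E \<bar>W - leaf\<bar>\<close> by at most \<open>2 \<sigma>\<^sub>m / (sqrt pi N\<^sub>m)\<close>. At the end the leaf is
  independent of \<open>W\<close> and distributed as a fresh leaf \<open>Z\<close>, so \<open>E \<bar>W - leaf\<bar> = E L(W)\<close>;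
  averaging the starting point over the training leaves gives the empirical loss.
\<close>

lemma idx_0: "idx n 0 = {[]}"
  by (auto simp: idx_def)

lemma idx_Suc: "idx n (Suc l) = (\<lambda>(is, a). is @ [a]) ` (idx n l \<times> {..<n (Suc l)})"
proof
  show "idx n (Suc l) \<subseteq> (\<lambda>(is, a). is @ [a]) ` (idx n l \<times> {..<n (Suc l)})"
  proof
    fix js assume "js \<in> idx n (Suc l)"
    then have len: "length js = Suc l" and lt: "\<forall>k<Suc l. js ! k < n (Suc k)"
      by (auto simp: idx_def)
    then have "js = butlast js @ [js ! l]"
      by (metis append_butlast_last_id diff_Suc_1 last_conv_nth list.size(3) nat.distinct(1))
    moreover have "butlast js \<in> idx n l" using len lt by (auto simp: idx_def nth_butlast)
    moreover have "js ! l < n (Suc l)" using lt by simp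
    ultimately show "js \<in> (\<lambda>(is, a). is @ [a]) ` (idx n l \<times> {..<n (Suc l)})"
      by (auto intro!: image_eqI[of _ _ "(butlast js, js ! l)"])
  qed
qed (auto simp: idx_def nth_append less_Suc_eq)

lemma finite_idx: "finite (idx n l)"
  by (induction l) (simp_all add: idx_0 idx_Suc)

lemma card_idx: "card (idx n l) = NN n l"
proof (induction l)
  case 0
  then show ?case by (simp add: idx_0 NN_def)
next
  case (Suc l)
  have "card (idx n (Suc l)) = card (idx n l \<times> {..<n (Suc l)})"
    unfolding idx_Suc by (rule card_image) (auto simp: inj_on_def)
  then show ?case using Suc by (simp add: card_cartesian_product NN_def)
qed

lemma take_in_idx: "is \<in> idx n l \<Longrightarrow> k \<le> l \<Longrightarrow> take k is \<in> idx n k"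
  by (auto simp: idx_def)

lemma replicate_0_in_idx: "(\<And>k. k \<in> {1..l} \<Longrightarrow> n k \<ge> 1) \<Longrightarrow> replicate l 0 \<in> idx n l"
  by (auto simp: idx_def Suc_le_eq)

lemma card_descendants_idx:
  assumes "is \<in> idx n l" "l \<le> L"
  shows "card {js \<in> idx n L. take l js = is} * NN n l = NN n L"
  using assms(2)
proof (induction L rule: dec_induct)
  case base
  have "{js \<in> idx n l. take l js = is} = {is}" using assms(1) by (auto simp: idx_def)
  then show ?case by simp
next
  case (step L)
  have "{js \<in> idx n (Suc L). take l js = is}
      = (\<lambda>(js, a). js @ [a]) ` ({js \<in> idx n L. take l js = is} \<times> {..<n (Suc L)})"
    unfolding idx_Suc using step(1) by (auto simp: image_iff idx_def)
  then have "card {js \<in> idx n (Suc L). take l js = is} = card {js \<in> idx n L. take l js = is} * n (Suc L)"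
    by (simp add: card_image inj_on_def card_cartesian_product)
  then show ?case using step by (simp add: NN_def)
qed

lemma NN_pos: "(\<And>k. k \<in> {1..l} \<Longrightarrow> n k \<ge> 1) \<Longrightarrow> NN n l > 0"
  unfolding NN_def by (intro prod_pos) (auto simp: Suc_le_eq)

lemma finite_nodes: "finite (nodes n L)"
proof -
  have "nodes n L = (\<Union>l\<in>{1..L}. Pair l ` idx n l)" by (auto simp: nodes_def)
  then show ?thesis by (simp add: finite_idx)
qed

lemma ancestor_in_nodes: "is \<in> idx n L \<Longrightarrow> k \<in> {1..L} \<Longrightarrow> (k, take k is) \<in> nodes n L"
  by (auto simp: nodes_def take_in_idx)

section \<open>Conditional laws\<close>

lemma prob_kernel_borelD:
  assumes "\<kappa> \<in> S \<rightarrow>\<^sub>M prob_algebra borel" "x \<in> space S"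
  shows "prob_space (\<kappa> x)" "sets (\<kappa> x) = sets borel" "space (\<kappa> x) = UNIV"
proof -
  have "\<kappa> x \<in> space (prob_algebra borel)" using assms by (rule measurable_space)
  then show "prob_space (\<kappa> x)" "sets (\<kappa> x) = sets borel" by (auto simp: space_prob_algebra)
  then show "space (\<kappa> x) = UNIV" by (metis sets_eq_imp_space_eq space_borel)
qed

lemma measurable_graph_kernel:
  assumes "\<kappa> \<in> S \<rightarrow>\<^sub>M prob_algebra borel"
  shows "(\<lambda>x. distr (\<kappa> x) (S \<Otimes>\<^sub>M borel) (Pair x)) \<in> S \<rightarrow>\<^sub>M subprob_algebra (S \<Otimes>\<^sub>M borel)"
  by (intro measurable_prob_algebraD measurable_distr_prob_space2[OF assms]) measurable

lemma emeasure_graph_kernel: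
  assumes \<kappa>: "\<kappa> \<in> S \<rightarrow>\<^sub>M prob_algebra borel" and x: "x \<in> space S" and D: "D \<in> sets (S \<Otimes>\<^sub>M borel)"
  shows "emeasure (distr (\<kappa> x) (S \<Otimes>\<^sub>M borel) (Pair x)) D = emeasure (\<kappa> x) (Pair x -` D)"
  using D x prob_kernel_borelD[OF \<kappa> x]
  by (subst emeasure_distr) (auto simp: measurable_Pair2' cong: measurable_cong_sets)

lemma is_cond_law_distr_pair:
  fixes S :: "'a measure"
  assumes M: "prob_space M" and cl: "is_cond_law M S X Z \<kappa>"
    and X[measurable]: "X \<in> M \<rightarrow>\<^sub>M S" and Z[measurable]: "Z \<in> borel_measurable M"
  shows "distr M (S \<Otimes>\<^sub>M borel) (\<lambda>\<omega>. (X \<omega>, Z \<omega>))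
       = distr M S X \<bind> (\<lambda>x. distr (\<kappa> x) (S \<Otimes>\<^sub>M borel) (Pair x))"
proof -
  let ?joint = "distr M (S \<Otimes>\<^sub>M borel) (\<lambda>\<omega>. (X \<omega>, Z \<omega>))" and ?PX = "distr M S X"
  let ?K = "\<lambda>x. distr (\<kappa> x) (S \<Otimes>\<^sub>M borel) (Pair x)"
  interpret prob_space M by (rule M)
  have \<kappa>: "\<kappa> \<in> S \<rightarrow>\<^sub>M prob_algebra borel" using cl by (simp add: is_cond_law_def)
  have K: "?K \<in> ?PX \<rightarrow>\<^sub>M subprob_algebra (S \<Otimes>\<^sub>M borel)"
    using measurable_graph_kernel[OF \<kappa>] by simp
  have PX: "space ?PX \<noteq> {}" using not_empty X by (auto simp: measurable_def)
  let ?E = "{a \<times> b |a b. a \<in> sets S \<and> b \<in> sets (borel :: real measure)}"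
  show ?thesis
  proof (rule measure_eqI_generator_eq[OF Int_stable_pair_measure_generator pair_measure_closed])
    fix D assume "D \<in> ?E"
    then obtain a b where D: "D = a \<times> b" "a \<in> sets S" "b \<in> sets borel" by auto
    have "emeasure ?joint D = emeasure M {\<omega>\<in>space M. X \<omega> \<in> a \<and> Z \<omega> \<in> b}"
      using D by (subst emeasure_distr) (auto intro!: arg_cong[where f = "emeasure M"])
    also have "\<dots> = (\<integral>\<^sup>+x. indicator a x * emeasure (\<kappa> x) b \<partial>?PX)"
      using cl D by (simp add: is_cond_law_def)
    also have "\<dots> = (\<integral>\<^sup>+x. emeasure (?K x) D \<partial>?PX)"
      using D by (intro nn_integral_cong) (auto simp: emeasure_graph_kernel[OF \<kappa>] indicator_def)
    also have "\<dots> = emeasure (?PX \<bind> ?K) D"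
      using D by (subst emeasure_bind[OF PX K]) auto
    finally show "emeasure ?joint D = emeasure (?PX \<bind> ?K) D" .
  next
    have "sets (?PX \<bind> ?K) = sets (S \<Otimes>\<^sub>M borel)"
      using PX K by (intro sets_bind) (auto dest: measurable_space simp: space_subprob_algebra)
    then show "sets (?PX \<bind> ?K) = sigma_sets (space S \<times> space borel) ?E"
      by (simp add: sets_pair_measure)
  next
    show "emeasure ?joint (space S \<times> space borel) \<noteq> \<infinity>"
      by (subst emeasure_distr) (auto simp: space_pair_measure[symmetric])
  next
    show "range (\<lambda>_. space S \<times> space borel) \<subseteq> ?E"
      using sets.top[of S] sets.top[of borel] by blast
  qed (auto simp: sets_pair_measure)
qed

lemma is_cond_law_emeasure_pair:
  fixes S :: "'a measure"
  assumes M: "prob_space M" and cl: "is_cond_law M S X Z \<kappa>"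
    and X[measurable]: "X \<in> M \<rightarrow>\<^sub>M S" and Z[measurable]: "Z \<in> borel_measurable M"
    and C: "C \<in> sets (S \<Otimes>\<^sub>M borel)"
  shows "emeasure M {\<omega>\<in>space M. (X \<omega>, Z \<omega>) \<in> C} = (\<integral>\<^sup>+x. emeasure (\<kappa> x) (Pair x -` C) \<partial>distr M S X)"
proof -
  interpret prob_space M by (rule M)
  have \<kappa>: "\<kappa> \<in> S \<rightarrow>\<^sub>M prob_algebra borel" using cl by (simp add: is_cond_law_def)
  have K: "(\<lambda>x. distr (\<kappa> x) (S \<Otimes>\<^sub>M borel) (Pair x)) \<in> distr M S X \<rightarrow>\<^sub>M subprob_algebra (S \<Otimes>\<^sub>M borel)"
    using measurable_graph_kernel[OF \<kappa>] by simp
  have PX: "space (distr M S X) \<noteq> {}" using not_empty X by (auto simp: measurable_def)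
  have "emeasure M {\<omega>\<in>space M. (X \<omega>, Z \<omega>) \<in> C} = emeasure (distr M (S \<Otimes>\<^sub>M borel) (\<lambda>\<omega>. (X \<omega>, Z \<omega>))) C"
    using C by (subst emeasure_distr) (auto intro!: arg_cong[where f = "emeasure M"])
  also have "\<dots> = (\<integral>\<^sup>+x. emeasure (distr (\<kappa> x) (S \<Otimes>\<^sub>M borel) (Pair x)) C \<partial>distr M S X)"
    using C by (simp add: is_cond_law_distr_pair[OF M cl X Z] emeasure_bind[OF PX K])
  also have "\<dots> = (\<integral>\<^sup>+x. emeasure (\<kappa> x) (Pair x -` C) \<partial>distr M S X)"
    using C by (intro nn_integral_cong) (simp add: emeasure_graph_kernel[OF \<kappa>])
  finally show ?thesis .
qed

lemma AE_eq_if_set_nn_integrals_eq: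
  assumes N: "prob_space N" and f: "f \<in> borel_measurable N" and g: "g \<in> borel_measurable N"
    and eq: "\<And>A. A \<in> sets N \<Longrightarrow> (\<integral>\<^sup>+x. indicator A x * f x \<partial>N) = (\<integral>\<^sup>+x. indicator A x * g x \<partial>N)"
  shows "AE x in N. f x = g x"
proof -
  interpret prob_space N by (rule N)
  have "density N f = density N g"
  proof (rule measure_eqI)
    fix A assume "A \<in> sets (density N f)"
    then have A: "A \<in> sets N" by simp
    show "emeasure (density N f) A = emeasure (density N g) A"
      using eq[OF A] A f g by (simp add: emeasure_density mult.commute)
  qed simp
  then show ?thesis using density_unique_iff[OF f g] by simp
qed

lemma right_continuous_eq_if_eq_on_Rats:
  fixes F G :: "real \<Rightarrow> real"
  assumes F: "continuous (at_right r) F" and G: "continuous (at_right r) G"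
    and eq: "\<And>q. q \<in> \<rat> \<Longrightarrow> F q = G q"
  shows "F r = G r"
proof -
  have "\<exists>q\<in>\<rat>. r < q \<and> q < r + inverse (real (Suc k))" for k
    by (rule Rats_dense_in_real) simp
  then obtain q where q: "\<And>k. q k \<in> \<rat>" "\<And>k. r < q k" "\<And>k. q k < r + inverse (real (Suc k))"
    by metis
  have upper: "(\<lambda>k. r + inverse (real (Suc k))) \<longlonglongrightarrow> r"
    using tendsto_add[OF tendsto_const LIMSEQ_inverse_real_of_nat, of r] by simp
  have "q \<longlonglongrightarrow> r"
    by (rule tendsto_sandwich[OF _ _ tendsto_const upper]) (intro always_eventually allI less_imp_le q)+
  then have q_lim: "filterlim q (at_right r) sequentially"
    by (rule tendsto_imp_filterlim_at_right) (intro always_eventually allI q)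
  have "(\<lambda>k. F (q k)) \<longlonglongrightarrow> F r" "(\<lambda>k. G (q k)) \<longlonglongrightarrow> G r"
    using F G q_lim unfolding continuous_within by (auto intro: filterlim_compose)
  moreover have "(\<lambda>k. F (q k)) = (\<lambda>k. G (q k))" using eq q by auto
  ultimately show ?thesis using LIMSEQ_unique by metis
qed

lemma real_measure_eqI_Rats:
  fixes P Q :: "real measure"
  assumes "prob_space P" "sets P = sets borel" "prob_space Q" "sets Q = sets borel"
    and eq: "\<And>q. q \<in> \<rat> \<Longrightarrow> emeasure P {..q} = emeasure Q {..q}"
  shows "P = Q"
proof -
  interpret P: real_distribution P using assms by (simp add: real_distribution_def real_distribution_axioms_def)
  interpret Q: real_distribution Q using assms by (simp add: real_distribution_def real_distribution_axioms_def)
  have "cdf P r = cdf Q r" for r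
    by (rule right_continuous_eq_if_eq_on_Rats[OF P.cdf_is_right_cont Q.cdf_is_right_cont])
      (simp add: eq cdf_def measure_def)
  then show ?thesis
    using assms by (intro cdf_unique) (auto simp: real_distribution_def real_distribution_axioms_def)
qed

lemma AE_kernel_eqI_Rats:
  fixes K1 K2 :: "'a \<Rightarrow> real measure"
  assumes K1: "\<And>x. x \<in> space N \<Longrightarrow> prob_space (K1 x) \<and> sets (K1 x) = sets borel"
    and K2: "\<And>x. x \<in> space N \<Longrightarrow> prob_space (K2 x) \<and> sets (K2 x) = sets borel"
    and eq: "\<And>q. q \<in> \<rat> \<Longrightarrow> AE x in N. emeasure (K1 x) {..q} = emeasure (K2 x) {..q}"
  shows "AE x in N. K1 x = K2 x"
proof -
  have "AE x in N. \<forall>q\<in>\<rat>. emeasure (K1 x) {..q} = emeasure (K2 x) {..q}"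
    using eq by (subst AE_ball_countable[OF countable_rat]) auto
  with AE_space show ?thesis
  proof eventually_elim
    case (elim x)
    then show ?case using K1[of x] K2[of x] by (intro real_measure_eqI_Rats) auto
  qed
qed

section \<open>Fair mixtures, translates and the Wasserstein distance\<close>

lemma ennreal_add_self_div_2: "(x + x) / 2 = (x :: ennreal)"
proof -
  have "x + x = x * 2" by (simp add: mult_2_right)
  then show ?thesis by (simp add: ennreal_mult_divide_eq)
qed

lemma ennreal_div_2_cancel: "(a :: ennreal) / 2 = b / 2 \<Longrightarrow> a = b"
  by (metis ennreal_add_self_div_2 ennreal_times_divide mult_2)

definition fair_mix :: "'a measure \<Rightarrow> 'a measure \<Rightarrow> 'a measure" where
  "fair_mix A B = measure_pmf (bernoulli_pmf (1/2)) \<bind> (\<lambda>b. if b then A else B)"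

context
  fixes A B N :: "'a measure"
  assumes A: "prob_space A" "sets A = sets N" and B: "prob_space B" "sets B = sets N"
begin

lemma fair_mix_kernel: "(\<lambda>b. if b then A else B) \<in> measure_pmf p \<rightarrow>\<^sub>M subprob_algebra N"
proof -
  have "(\<lambda>b. if b then A else B) \<in> count_space UNIV \<rightarrow>\<^sub>M subprob_algebra N"
    using A B by (auto simp: space_subprob_algebra prob_space_imp_subprob_space)
  then show ?thesis by (simp cong: measurable_cong_sets)
qed

lemma sets_fair_mix: "sets (fair_mix A B) = sets N"
  unfolding fair_mix_def using A B by (subst sets_bind[where N = N]) auto

lemma prob_space_fair_mix: "prob_space (fair_mix A B)"
  unfolding fair_mix_def using A B
  by (intro prob_space.prob_space_bind[OF measure_pmf.prob_space_axioms _ fair_mix_kernel]) auto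

lemma nn_integral_fair_mix:
  assumes f: "f \<in> borel_measurable N"
  shows "(\<integral>\<^sup>+x. f x \<partial>fair_mix A B) = ((\<integral>\<^sup>+x. f x \<partial>A) + (\<integral>\<^sup>+x. f x \<partial>B)) / 2"
proof -
  have "(\<integral>\<^sup>+x. f x \<partial>fair_mix A B)
      = (\<integral>\<^sup>+b. (\<integral>\<^sup>+x. f x \<partial>(if b then A else B)) \<partial>measure_pmf (bernoulli_pmf (1/2)))"
    unfolding fair_mix_def by (rule nn_integral_bind[OF f fair_mix_kernel])
  also have "\<dots> = (\<integral>\<^sup>+x. f x \<partial>A) * ennreal (1/2) + (\<integral>\<^sup>+x. f x \<partial>B) * ennreal (1 - 1/2)"
    by (subst nn_integral_bernoulli_pmf) auto
  also have "\<dots> = ((\<integral>\<^sup>+x. f x \<partial>A) + (\<integral>\<^sup>+x. f x \<partial>B)) / 2"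
    by (simp add: divide_ennreal_def ennreal_divide_numeral distrib_right[symmetric]
        ennreal_inverse_positive flip: divide_ennreal)
  finally show ?thesis .
qed

lemma emeasure_fair_mix:
  assumes X: "X \<in> sets N"
  shows "emeasure (fair_mix A B) X = (emeasure A X + emeasure B X) / 2"
  using nn_integral_fair_mix[of "indicator X"] X A B sets_fair_mix by simp

lemma distr_fair_mix:
  assumes g: "g \<in> N \<rightarrow>\<^sub>M R"
  shows "distr (fair_mix A B) R g = fair_mix (distr A R g) (distr B R g)"
proof -
  have "distr (fair_mix A B) R g
      = measure_pmf (bernoulli_pmf (1/2)) \<bind> (\<lambda>b. distr (if b then A else B) R g)"
    unfolding fair_mix_def by (rule distr_bind[OF fair_mix_kernel _ g]) simp
  also have "(\<lambda>b. distr (if b then A else B) R g) = (\<lambda>b. if b then distr A R g else distr B R g)"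
    by auto
  finally show ?thesis unfolding fair_mix_def .
qed

end

lemma fair_mix_same: "prob_space A \<Longrightarrow> fair_mix A A = A"
  unfolding fair_mix_def
  by (simp add: bind_const'[OF measure_pmf.prob_space_axioms prob_space_imp_subprob_space])

definition translate_measure :: "real \<Rightarrow> real measure \<Rightarrow> real measure" where
  "translate_measure d K = distr K borel (\<lambda>w. w + d)"

lemma
  assumes "prob_space K" "sets K = sets borel"
  shows prob_space_translate_measure: "prob_space (translate_measure d K)"
    and sets_translate_measure: "sets (translate_measure d K) = sets borel"
  unfolding translate_measure_def using assms
  by (auto intro!: prob_space.prob_space_distr simp: measurable_cong_sets[OF assms(2) refl])

lemma emeasure_translate_measure:
  assumes "sets K = sets borel" "B \<in> sets borel"
  shows "emeasure (translate_measure d K) B = emeasure K {w \<in> space K. w + d \<in> B}"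
  unfolding translate_measure_def using assms
  by (subst emeasure_distr) (auto simp: measurable_cong_sets[OF assms(1) refl] vimage_def Int_def conj_commute)

lemma wasserstein1_le_coupling:
  "\<pi> \<in> couplings P Q \<Longrightarrow> wasserstein1 P Q \<le> (\<integral>\<^sup>+z. ennreal \<bar>fst z - snd z\<bar> \<partial>\<pi>)"
  unfolding wasserstein1_def by (rule INF_lower)

lemma wasserstein1_fair_mix_le:
  assumes K: "prob_space K" "sets K = sets borel"
    and [measurable]: "g1 \<in> borel_measurable borel" "h1 \<in> borel_measurable borel"
      "g2 \<in> borel_measurable borel" "h2 \<in> borel_measurable borel"
  shows "wasserstein1 (fair_mix (distr K borel g1) (distr K borel g2)) (fair_mix (distr K borel h1) (distr K borel h2))
     \<le> ((\<integral>\<^sup>+w. ennreal \<bar>g1 w - h1 w\<bar> \<partial>K) + (\<integral>\<^sup>+w. ennreal \<bar>g2 w - h2 w\<bar> \<partial>K)) / 2"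
proof -
  let ?N = "borel \<Otimes>\<^sub>M borel :: (real \<times> real) measure"
  define \<pi>1 where "\<pi>1 = distr K ?N (\<lambda>w. (g1 w, h1 w))"
  define \<pi>2 where "\<pi>2 = distr K ?N (\<lambda>w. (g2 w, h2 w))"
  have meas: "(\<lambda>w. (g w, h w)) \<in> K \<rightarrow>\<^sub>M ?N"
    if "g \<in> borel_measurable borel" "h \<in> borel_measurable borel" for g h
    using that K(2) by (auto cong: measurable_cong_sets)
  have \<pi>: "prob_space \<pi>1" "sets \<pi>1 = sets ?N" "prob_space \<pi>2" "sets \<pi>2 = sets ?N"
    unfolding \<pi>1_def \<pi>2_def using K by (auto intro!: prob_space.prob_space_distr meas)
  have marginals: "distr \<pi>1 borel fst = distr K borel g1" "distr \<pi>1 borel snd = distr K borel h1"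
    "distr \<pi>2 borel fst = distr K borel g2" "distr \<pi>2 borel snd = distr K borel h2"
    unfolding \<pi>1_def \<pi>2_def by (subst distr_distr; simp add: meas comp_def)+
  have "fair_mix \<pi>1 \<pi>2 \<in> couplings (fair_mix (distr K borel g1) (distr K borel g2))
                                    (fair_mix (distr K borel h1) (distr K borel h2))"
    using sets_fair_mix[OF \<pi>] prob_space_fair_mix[OF \<pi>]
      distr_fair_mix[OF \<pi>, of fst borel] distr_fair_mix[OF \<pi>, of snd borel]
    by (simp add: couplings_def marginals)
  then have "wasserstein1 (fair_mix (distr K borel g1) (distr K borel g2)) (fair_mix (distr K borel h1) (distr K borel h2))
      \<le> (\<integral>\<^sup>+z. ennreal \<bar>fst z - snd z\<bar> \<partial>fair_mix \<pi>1 \<pi>2)"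
    by (rule wasserstein1_le_coupling)
  also have "\<dots> = ((\<integral>\<^sup>+w. ennreal \<bar>g1 w - h1 w\<bar> \<partial>K) + (\<integral>\<^sup>+w. ennreal \<bar>g2 w - h2 w\<bar> \<partial>K)) / 2"
    unfolding nn_integral_fair_mix[OF \<pi>, of "\<lambda>z. ennreal \<bar>fst z - snd z\<bar>", simplified]
    unfolding \<pi>1_def \<pi>2_def by (simp add: nn_integral_distr meas)
  finally show ?thesis .
qed

lemma wasserstein1_translate_fair_mix_le:
  assumes K: "prob_space K" "sets K = sets borel"
  shows "wasserstein1 K (fair_mix K (translate_measure d K)) \<le> ennreal (\<bar>d\<bar> / 2)"
    and "wasserstein1 (translate_measure d K) (fair_mix K (translate_measure d K)) \<le> ennreal (\<bar>d\<bar> / 2)"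
proof -
  interpret prob_space K by (rule K(1))
  have id: "distr K borel (\<lambda>w. w) = K" by (rule distr_id2) (simp add: K(2))
  have "wasserstein1 (fair_mix (distr K borel (\<lambda>w. w)) (distr K borel (\<lambda>w. w)))
                     (fair_mix (distr K borel (\<lambda>w. w)) (distr K borel (\<lambda>w. w + d)))
     \<le> ((\<integral>\<^sup>+w. ennreal \<bar>w - w\<bar> \<partial>K) + (\<integral>\<^sup>+w. ennreal \<bar>w - (w + d)\<bar> \<partial>K)) / 2"
    by (rule wasserstein1_fair_mix_le[OF K]) auto
  then show "wasserstein1 K (fair_mix K (translate_measure d K)) \<le> ennreal (\<bar>d\<bar> / 2)"
    using K by (simp add: id fair_mix_same translate_measure_def emeasure_space_1 ennreal_divide_numeral)
  have "wasserstein1 (fair_mix (distr K borel (\<lambda>w. w + d)) (distr K borel (\<lambda>w. w + d)))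
                     (fair_mix (distr K borel (\<lambda>w. w)) (distr K borel (\<lambda>w. w + d)))
     \<le> ((\<integral>\<^sup>+w. ennreal \<bar>w + d - w\<bar> \<partial>K) + (\<integral>\<^sup>+w. ennreal \<bar>w + d - (w + d)\<bar> \<partial>K)) / 2"
    by (rule wasserstein1_fair_mix_le[OF K]) auto
  then show "wasserstein1 (translate_measure d K) (fair_mix K (translate_measure d K)) \<le> ennreal (\<bar>d\<bar> / 2)"
    using K prob_space_translate_measure[OF K, of d]
    by (simp add: id fair_mix_same translate_measure_def emeasure_space_1 ennreal_divide_numeral)
qed

lemma nn_integral_PiM_uniform:
  fixes J :: "'i set" and A :: "'a set"
  assumes J: "finite J" and A: "finite A" "A \<noteq> {}"
  shows "(\<integral>\<^sup>+u. f u \<partial>PiM J (\<lambda>_. measure_pmf (pmf_of_set A)))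
       = (\<Sum>u\<in>PiE J (\<lambda>_. A). f u) * ennreal ((1 / card A) ^ card J)"
proof -
  let ?M = "PiM J (\<lambda>_. measure_pmf (pmf_of_set A))" and ?U = "PiE J (\<lambda>_. A)"
  interpret P: product_prob_space "\<lambda>_::'i. measure_pmf (pmf_of_set A)" by unfold_locales
  have U: "?U \<in> sets ?M" by (intro sets_PiM_I_finite J) auto
  have single: "{u} = PiE J (\<lambda>j. {u j})" if "u \<in> ?U" for u
    using that by (auto simp: PiE_iff extensional_def fun_eq_iff) metis
  have "emeasure ?M ?U = (\<Prod>j\<in>J. emeasure (measure_pmf (pmf_of_set A)) A)"
    by (rule P.emeasure_PiM[OF J]) auto
  also have "\<dots> = 1" using A by (simp add: measure_pmf.emeasure_eq_1_AE AE_measure_pmf_iff)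
  finally have "AE u in ?M. u \<in> ?U"
    using U by (intro prob_space.AE_prob_1 prob_space_PiM measure_pmf.prob_space_axioms)
      (simp add: measure_def)
  then have "(\<integral>\<^sup>+u. f u \<partial>?M) = (\<integral>\<^sup>+u. f u * indicator ?U u \<partial>?M)"
    by (intro nn_integral_cong_AE) auto
  also have "\<dots> = (\<Sum>u\<in>?U. f u * emeasure ?M {u})"
    using J A single by (intro nn_integral_indicator_finite) (auto intro: finite_PiE sets_PiM_I_finite)
  also have "\<dots> = (\<Sum>u\<in>?U. f u * ennreal ((1 / card A) ^ card J))"
  proof (intro sum.cong refl arg_cong2[where f = "(*)"])
    fix u assume u: "u \<in> ?U"
    then have "emeasure ?M {u} = (\<Prod>j\<in>J. emeasure (measure_pmf (pmf_of_set A)) {u j})"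
      using P.emeasure_PiM[OF J, of "\<lambda>j. {u j}"] single[OF u] by simp
    also have "\<dots> = (\<Prod>j\<in>J. ennreal (1 / card A))"
      using u A by (intro prod.cong refl) (auto simp: emeasure_pmf_single PiE_iff)
    finally show "emeasure ?M {u} = ennreal ((1 / card A) ^ card J)"
      by (simp add: ennreal_power)
  qed
  finally show ?thesis by (simp add: sum_distrib_right)
qed

lemma measurable_reindex_PiM:
  assumes "t ` K \<subseteq> I"
  shows "(\<lambda>x. \<lambda>k\<in>K. x (t k)) \<in> PiM I (\<lambda>_. M) \<rightarrow>\<^sub>M PiM K (\<lambda>_. M)"
proof (rule measurable_PiM_single')
  fix k assume "k \<in> K"
  then show "(\<lambda>x. (\<lambda>k\<in>K. x (t k)) k) \<in> PiM I (\<lambda>_. M) \<rightarrow>\<^sub>M M"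
    using assms by (simp add: image_subset_iff)
qed (use assms in \<open>auto simp: space_PiM PiE_def Pi_iff extensional_def\<close>)

context
  fixes M :: "'a measure"
  assumes M: "prob_space M"
begin

lemma nn_integral_PiM_reindex:
  assumes t: "inj_on t K" "t ` K \<subseteq> I" and g[measurable]: "g \<in> borel_measurable (PiM K (\<lambda>_. M))"
  shows "(\<integral>\<^sup>+x. g (\<lambda>k\<in>K. x (t k)) \<partial>PiM I (\<lambda>_. M)) = (\<integral>\<^sup>+y. g y \<partial>PiM K (\<lambda>_. M))"
proof -
  have "distr (PiM I (\<lambda>_. M)) (PiM K (\<lambda>_. M)) (\<lambda>x. \<lambda>k\<in>K. x (t k)) = PiM K (\<lambda>_. M)"
    using distr_PiM_reindex[of I "\<lambda>_. M" t K] t M by auto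
  moreover have "(\<integral>\<^sup>+y. g y \<partial>distr (PiM I (\<lambda>_. M)) (PiM K (\<lambda>_. M)) (\<lambda>x. \<lambda>k\<in>K. x (t k)))
      = (\<integral>\<^sup>+x. g (\<lambda>k\<in>K. x (t k)) \<partial>PiM I (\<lambda>_. M))"
    by (intro nn_integral_distr[OF measurable_reindex_PiM[OF t(2)]]) simp
  ultimately show ?thesis by simp
qed

lemma nn_integral_PiM_indep_reindex:
  fixes t :: "'k \<Rightarrow> 'i"
  assumes I: "finite I" "S \<subseteq> I" and t: "inj_on t K" "t ` K \<subseteq> I - S"
    and f[measurable]: "f \<in> borel_measurable (PiM I (\<lambda>_. M))"
    and f_local: "\<And>x y. (\<And>i. i \<in> S \<Longrightarrow> x i = y i) \<Longrightarrow> f x = f y"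
    and g[measurable]: "g \<in> borel_measurable (PiM K (\<lambda>_. M))"
    and h[measurable]: "(\<lambda>(a, b). h a b) \<in> borel_measurable (borel \<Otimes>\<^sub>M borel)"
  shows "(\<integral>\<^sup>+x. h (f x) (g (\<lambda>k\<in>K. x (t k))) \<partial>PiM I (\<lambda>_. M))
       = (\<integral>\<^sup>+x. (\<integral>\<^sup>+y. h (f x) (g y) \<partial>PiM K (\<lambda>_. M)) \<partial>PiM I (\<lambda>_. M))"
proof -
  interpret product_sigma_finite "\<lambda>_::'i. M"
    by (simp add: product_sigma_finite_def M prob_space_imp_sigma_finite)
  let ?R = "I - S" and ?PK = "PiM K (\<lambda>_. M)"
  have fin: "finite S" "finite ?R" and IS: "S \<inter> ?R = {}" "S \<union> ?R = I"
    using I by (auto intro: finite_subset)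
  define F where "F a = f (merge S ?R (a, undefined))" for a
  have f_merge: "f (merge S ?R (a, b)) = F a" for a b
    unfolding F_def by (rule f_local) (simp add: merge_def)
  have t_merge: "(\<lambda>k\<in>K. merge S ?R (a, b) (t k)) = (\<lambda>k\<in>K. b (t k))" for a b
    using t by (auto simp: merge_def fun_eq_iff)
  have [measurable]: "(\<lambda>w. \<integral>\<^sup>+y. h w (g y) \<partial>?PK) \<in> borel_measurable borel"
  proof -
    interpret sigma_finite_measure ?PK by (intro prob_space_imp_sigma_finite prob_space_PiM M)
    show ?thesis by measurable
  qed
  have [measurable]: "(\<lambda>x. \<lambda>k\<in>K. x (t k)) \<in> PiM I (\<lambda>_. M) \<rightarrow>\<^sub>M ?PK"
    using t by (intro measurable_reindex_PiM) auto
  have "(\<integral>\<^sup>+x. h (f x) (g (\<lambda>k\<in>K. x (t k))) \<partial>PiM I (\<lambda>_. M))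
      = (\<integral>\<^sup>+a. (\<integral>\<^sup>+b. h (F a) (g (\<lambda>k\<in>K. b (t k))) \<partial>PiM ?R (\<lambda>_. M)) \<partial>PiM S (\<lambda>_. M))"
    using product_nn_integral_fold[OF IS(1) fin, of "\<lambda>x. h (f x) (g (\<lambda>k\<in>K. x (t k)))"]
    by (simp add: Un_absorb1[OF I(2)] f_merge t_merge)
  also have "\<dots> = (\<integral>\<^sup>+a. (\<integral>\<^sup>+b. (\<integral>\<^sup>+y. h (F a) (g y) \<partial>?PK) \<partial>PiM ?R (\<lambda>_. M)) \<partial>PiM S (\<lambda>_. M))"
  proof (rule nn_integral_cong)
    fix a
    have "(\<integral>\<^sup>+b. h (F a) (g (\<lambda>k\<in>K. b (t k))) \<partial>PiM ?R (\<lambda>_. M)) = (\<integral>\<^sup>+y. h (F a) (g y) \<partial>?PK)"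
      using t by (intro nn_integral_PiM_reindex) auto
    then show "(\<integral>\<^sup>+b. h (F a) (g (\<lambda>k\<in>K. b (t k))) \<partial>PiM ?R (\<lambda>_. M))
        = (\<integral>\<^sup>+b. (\<integral>\<^sup>+y. h (F a) (g y) \<partial>?PK) \<partial>PiM ?R (\<lambda>_. M))"
      by (simp add: prob_space.emeasure_space_1[OF prob_space_PiM[OF M]])
  qed
  also have "\<dots> = (\<integral>\<^sup>+x. (\<integral>\<^sup>+y. h (f x) (g y) \<partial>?PK) \<partial>PiM I (\<lambda>_. M))"
    using product_nn_integral_fold[OF IS(1) fin, of "\<lambda>x. \<integral>\<^sup>+y. h (f x) (g y) \<partial>?PK"]
    by (simp add: Un_absorb1[OF I(2)] f_merge)
  finally show ?thesis .
qed

end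

abbreviation std_normal :: "real measure" where
  "std_normal \<equiv> density lborel std_normal_density"

lemma prob_space_std_normal: "prob_space std_normal"
  by (rule prob_space_normal_density) simp

lemma borel_measurable_PiM_std_normal_component:
  "i \<in> I \<Longrightarrow> (\<lambda>x. x i) \<in> borel_measurable (PiM I (\<lambda>_. std_normal))"
  using measurable_component_singleton[of i I "\<lambda>_. std_normal"] by (simp cong: measurable_cong_sets)

lemma distr_PiM_std_normal_component:
  assumes "i \<in> I" "sets N = sets borel"
  shows "distr (PiM I (\<lambda>_. std_normal)) N (\<lambda>x. x i) = std_normal"
proof -
  have "distr (PiM I (\<lambda>_. std_normal)) N (\<lambda>x. x i) = distr (PiM I (\<lambda>_. std_normal)) std_normal (\<lambda>x. x i)"
    using assms(2) by (intro distr_cong) auto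
  also have "\<dots> = std_normal"
    using assms by (intro distr_PiM_component prob_space_std_normal)
  finally show ?thesis .
qed

lemma distributed_PiM_std_normal_component:
  assumes "i \<in> I"
  shows "distributed (PiM I (\<lambda>_. std_normal)) lborel (\<lambda>x. x i) std_normal_density"
  using measurable_component_singleton[OF assms, of "\<lambda>_. std_normal"]
    distr_PiM_std_normal_component[OF assms, of lborel]
  by (auto simp: distributed_def cong: measurable_cong_sets)

lemma indep_var_PiM_std_normal_components:
  assumes ij: "i \<in> I" "j \<in> I" "i \<noteq> j"
  shows "prob_space.indep_var (PiM I (\<lambda>_. std_normal)) borel (\<lambda>x. x i) borel (\<lambda>x. x j)"
proof -
  let ?P = "PiM I (\<lambda>_. std_normal)"
  interpret P: prob_space ?P by (intro prob_space_PiM prob_space_std_normal)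
  define f where "f b = (if b then i else j)" for b
  have f: "f \<in> UNIV \<rightarrow> I" "inj_on f UNIV" using ij by (auto simp: f_def inj_on_def)
  have "distr ?P (PiM UNIV (\<lambda>_. borel)) (\<lambda>x. \<lambda>b\<in>UNIV. x (f b))
      = distr ?P (PiM UNIV (\<lambda>_. std_normal)) (\<lambda>x. \<lambda>b\<in>UNIV. x (f b))"
    by (intro distr_cong refl sets_PiM_cong) auto
  also have "\<dots> = PiM UNIV (\<lambda>_. std_normal)"
    using distr_PiM_reindex[of I "\<lambda>_. std_normal" f UNIV] f prob_space_std_normal by simp
  also have "\<dots> = PiM UNIV (\<lambda>b. distr ?P borel (\<lambda>x. x (f b)))"
    using f by (intro PiM_cong refl) (simp add: distr_PiM_std_normal_component Pi_iff)
  finally have "P.indep_vars (\<lambda>_. borel) (\<lambda>b x. x (f b)) UNIV"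
    using f by (subst P.indep_vars_iff_distr_eq_PiM')
      (auto simp: Pi_iff intro: borel_measurable_PiM_std_normal_component)
  then show ?thesis unfolding P.indep_var_def
    by (rule P.indep_vars_cong[THEN iffD1, rotated 3]) (auto simp: f_def split: bool.split)
qed

lemma nn_integral_PiM_std_normal_abs_diff:
  assumes "i \<in> I" "j \<in> I" "i \<noteq> j"
  shows "(\<integral>\<^sup>+x. ennreal \<bar>x i - x j\<bar> \<partial>PiM I (\<lambda>_. std_normal)) = ennreal (2 / sqrt pi)"
proof -
  let ?P = "PiM I (\<lambda>_. std_normal)"
  interpret P: prob_space ?P by (intro prob_space_PiM prob_space_std_normal)
  have "distributed ?P lborel (\<lambda>x. x i - x j) (normal_density (0 - 0) (sqrt (1\<^sup>2 + 1\<^sup>2)))"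
    using assms by (intro P.diff_indep_normal indep_var_PiM_std_normal_components
        distributed_PiM_std_normal_component) auto
  then have law: "distr ?P lborel (\<lambda>x. x i - x j) = density lborel (normal_density 0 (sqrt 2))"
    by (simp add: distributed_def)
  note borel_measurable_PiM_std_normal_component[measurable]
  have "has_bochner_integral lborel (\<lambda>z. normal_density 0 (sqrt 2) z * \<bar>z\<bar>) (sqrt 2 * sqrt (2 / pi))"
    using normal_moment_abs_odd[where \<mu> = 0 and \<sigma> = "sqrt 2" and k = 0] by simp
  then have "(\<integral>\<^sup>+z. ennreal (normal_density 0 (sqrt 2) z * \<bar>z\<bar>) \<partial>lborel) = ennreal (2 / sqrt pi)"
    by (subst nn_integral_eq_integral)
      (auto simp: has_bochner_integral_iff normal_density_nonneg real_sqrt_divide)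
  moreover have "(\<integral>\<^sup>+x. ennreal \<bar>x i - x j\<bar> \<partial>?P) = (\<integral>\<^sup>+z. ennreal \<bar>z\<bar> \<partial>distr ?P lborel (\<lambda>x. x i - x j))"
    using assms by (subst nn_integral_distr) auto
  ultimately show ?thesis
    unfolding law by (subst (asm) nn_integral_density)
      (auto simp: ennreal_mult normal_density_nonneg intro!: nn_integral_cong)
qed

abbreviation fair_selector :: "nat measure" where
  "fair_selector \<equiv> measure_pmf (pmf_of_set {1, 2})"

definition noise_coords :: "(nat \<Rightarrow> nat) \<Rightarrow> nat \<Rightarrow> ((nat \<times> nat list) \<times> nat) set" where
  "noise_coords n L = nodes n L \<times> {1, 2}"

definition noise_space :: "(nat \<Rightarrow> nat) \<Rightarrow> nat \<Rightarrow> (((nat \<times> nat list) \<times> nat) \<Rightarrow> real) measure" where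
  "noise_space n L = PiM (noise_coords n L) (\<lambda>_. std_normal)"

definition selector_space :: "(nat \<Rightarrow> nat) \<Rightarrow> nat \<Rightarrow> ((nat \<times> nat list) \<Rightarrow> nat) measure" where
  "selector_space n L = PiM (nodes n L) (\<lambda>_. fair_selector)"

definition selectors :: "(nat \<Rightarrow> nat) \<Rightarrow> nat \<Rightarrow> ((nat \<times> nat list) \<Rightarrow> nat) set" where
  "selectors n L = PiE (nodes n L) (\<lambda>_. {1, 2})"

lemma supersample_space_eq_pair: "supersample_space n L = noise_space n L \<Otimes>\<^sub>M selector_space n L"
  by (simp add: supersample_space_def noise_space_def selector_space_def noise_coords_def)

lemma finite_noise_coords: "finite (noise_coords n L)"
  by (simp add: noise_coords_def finite_nodes)

lemma prob_space_noise_space: "prob_space (noise_space n L)"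
  unfolding noise_space_def by (intro prob_space_PiM prob_space_std_normal)

lemma prob_space_selector_space: "prob_space (selector_space n L)"
  unfolding selector_space_def by (intro prob_space_PiM measure_pmf.prob_space_axioms)

lemma pair_sigma_finite_noise_selector: "pair_sigma_finite (noise_space n L) (selector_space n L)"
  by (intro pair_sigma_finite.intro prob_space_imp_sigma_finite prob_space_noise_space
      prob_space_selector_space)

lemma prob_space_supersample_space: "prob_space (supersample_space n L)"
  unfolding supersample_space_eq_pair
  by (intro prob_space_pair prob_space_noise_space prob_space_selector_space)

lemma space_supersample_space:
  "space (supersample_space n L) = PiE (noise_coords n L) (\<lambda>_. UNIV) \<times> PiE (nodes n L) (\<lambda>_. UNIV)"
  by (simp add: supersample_space_eq_pair space_pair_measure noise_space_def selector_space_def space_PiM)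

lemma nn_integral_supersample_space:
  assumes "h \<in> borel_measurable (supersample_space n L)"
  shows "(\<integral>\<^sup>+\<omega>. h \<omega> \<partial>supersample_space n L)
     = (\<Sum>u\<in>selectors n L. \<integral>\<^sup>+x. h (x, u) \<partial>noise_space n L) * ennreal ((1/2) ^ card (nodes n L))"
proof -
  interpret pair_sigma_finite "noise_space n L" "selector_space n L"
    by (rule pair_sigma_finite_noise_selector)
  have "(\<integral>\<^sup>+\<omega>. h \<omega> \<partial>supersample_space n L) = (\<integral>\<^sup>+u. (\<integral>\<^sup>+x. h (x, u) \<partial>noise_space n L) \<partial>selector_space n L)"
    using assms unfolding supersample_space_eq_pair by (subst nn_integral_snd[symmetric]) auto
  then show ?thesis
    by (simp add: selector_space_def selectors_def nn_integral_PiM_uniform finite_nodes)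
qed

lemma selector_in_space: "u \<in> selectors n L \<Longrightarrow> (\<lambda>x. (x, u)) \<in> noise_space n L \<rightarrow>\<^sub>M supersample_space n L"
  unfolding supersample_space_eq_pair
  by (auto simp: selectors_def selector_space_def space_PiM PiE_iff)

lemma selectors_12: "u \<in> selectors n L \<Longrightarrow> c \<in> nodes n L \<Longrightarrow> u c \<in> {1, 2}"
  by (auto simp: selectors_def PiE_iff)

lemma borel_measurable_noise[measurable]: "(\<lambda>\<omega>. fst \<omega> d) \<in> borel_measurable (supersample_space n L)"
proof (cases "d \<in> noise_coords n L")
  case True
  then have "(\<lambda>x. x d) \<in> borel_measurable (noise_space n L)"
    by (simp add: noise_space_def borel_measurable_PiM_std_normal_component)
  then show ?thesis unfolding supersample_space_eq_pair by measurable
next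
  case False
  then have "fst \<omega> d = undefined" if "\<omega> \<in> space (supersample_space n L)" for \<omega>
    using that by (auto simp: space_supersample_space mem_Times_iff PiE_def intro: extensional_arb)
  then show ?thesis by (simp cong: measurable_cong)
qed

lemma measurable_selector[measurable]:
  "(\<lambda>\<omega>. snd \<omega> c) \<in> supersample_space n L \<rightarrow>\<^sub>M count_space UNIV"
proof (cases "c \<in> nodes n L")
  case True
  then have "(\<lambda>u. u c) \<in> selector_space n L \<rightarrow>\<^sub>M count_space UNIV"
    unfolding selector_space_def using measurable_component_singleton[OF True, of "\<lambda>_. fair_selector"]
    by (simp cong: measurable_cong_sets)
  then show ?thesis unfolding supersample_space_eq_pair by measurable
next
  case False
  then have "snd \<omega> c = undefined" if "\<omega> \<in> space (supersample_space n L)" for \<omega>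
    using that by (auto simp: space_supersample_space mem_Times_iff PiE_def intro: extensional_arb)
  then show ?thesis by (simp cong: measurable_cong)
qed

lemma borel_measurable_mutil[measurable]:
  "(\<lambda>\<omega>. mutil \<theta> \<sigma> \<omega> l js j) \<in> borel_measurable (supersample_space n L)"
proof (induction l arbitrary: js j)
  case (Suc l)
  have "(\<lambda>\<omega>. mutil \<theta> \<sigma> \<omega> l (take l js) (snd \<omega> (l, take l js))) \<in> borel_measurable (supersample_space n L)"
    by (rule measurable_compose_countable[OF Suc measurable_selector])
  then show ?case by simp
qed simp

lemma borel_measurable_musel[measurable]:
  "(\<lambda>\<omega>. musel \<theta> \<sigma> \<omega> l js) \<in> borel_measurable (supersample_space n L)"
  unfolding musel_def by (rule measurable_compose_countable[OF borel_measurable_mutil measurable_selector])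

lemma borel_measurable_hypW[measurable]: "hypW n L \<theta> \<sigma> \<in> borel_measurable (supersample_space n L)"
  unfolding hypW_def by measurable

text \<open>A selector may take any natural number in \<open>space (supersample_space n L)\<close>; it lies in
  \<open>{1, 2}\<close> only almost surely.\<close>

lemma AE_selector_12: "c \<in> nodes n L \<Longrightarrow> AE \<omega> in supersample_space n L. snd \<omega> c \<in> {1, 2}"
proof -
  assume c: "c \<in> nodes n L"
  let ?S = "{\<omega>\<in>space (supersample_space n L). snd \<omega> c \<notin> {1, 2}}"
  have S: "?S \<in> sets (supersample_space n L)"
    using measurable_sets[OF measurable_selector, of "- {1, 2}"] by (simp add: vimage_def Int_def conj_commute)
  have "emeasure (supersample_space n L) ?S
      = (\<Sum>u\<in>selectors n L. \<integral>\<^sup>+x. indicator ?S (x, u) \<partial>noise_space n L) * ennreal ((1/2) ^ card (nodes n L))"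
    using S by (simp flip: nn_integral_indicator add: nn_integral_supersample_space)
  also have "(\<Sum>u\<in>selectors n L. \<integral>\<^sup>+x. indicator ?S (x, u) \<partial>noise_space n L) = 0"
    using c by (intro sum.neutral ballI) (auto simp: selectors_def PiE_iff indicator_def)
  finally show ?thesis using S by (intro AE_I[where N = ?S]) auto
qed

lemma AE_selectors_12: "AE \<omega> in supersample_space n L. \<forall>c\<in>nodes n L. snd \<omega> c \<in> {1, 2}"
  by (rule AE_finite_allI[OF finite_nodes]) (rule AE_selector_12)

lemma nn_integral_abs_noise_diff:
  assumes "c \<in> nodes n L"
  shows "(\<integral>\<^sup>+\<omega>. ennreal \<bar>fst \<omega> (c, 1) - fst \<omega> (c, 2)\<bar> \<partial>supersample_space n L) = ennreal (2 / sqrt pi)"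
proof -
  interpret pair_sigma_finite "noise_space n L" "selector_space n L"
    by (rule pair_sigma_finite_noise_selector)
  interpret S: prob_space "selector_space n L" by (rule prob_space_selector_space)
  have c: "(c, 1) \<in> noise_coords n L" "(c, 2) \<in> noise_coords n L"
    using assms by (auto simp: noise_coords_def)
  then have [measurable]: "(\<lambda>x. x (c, 1)) \<in> borel_measurable (noise_space n L)"
      "(\<lambda>x. x (c, 2)) \<in> borel_measurable (noise_space n L)"
    by (simp_all add: noise_space_def borel_measurable_PiM_std_normal_component)
  have m: "(\<lambda>\<omega>. \<bar>fst \<omega> (c, 1) - fst \<omega> (c, 2)\<bar>)
      \<in> borel_measurable (noise_space n L \<Otimes>\<^sub>M selector_space n L)"
    unfolding supersample_space_eq_pair[symmetric] by measurable
  have "(\<integral>\<^sup>+\<omega>. ennreal \<bar>fst \<omega> (c, 1) - fst \<omega> (c, 2)\<bar> \<partial>supersample_space n L)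
      = (\<integral>\<^sup>+u. (\<integral>\<^sup>+x. ennreal \<bar>x (c, 1) - x (c, 2)\<bar> \<partial>noise_space n L) \<partial>selector_space n L)"
    unfolding supersample_space_eq_pair using m by (subst nn_integral_snd[symmetric]) auto
  also have "\<dots> = ennreal (2 / sqrt pi)"
    using c by (simp add: noise_space_def nn_integral_PiM_std_normal_abs_diff S.emeasure_space_1)
  finally show ?thesis .
qed

lemma sum_selectors_const: "(\<Sum>u\<in>selectors n L. a) * ennreal ((1/2) ^ card (nodes n L)) = a"
proof -
  have "card (selectors n L) = 2 ^ card (nodes n L)"
    by (simp add: selectors_def card_PiE finite_nodes numeral_2_eq_2)
  then have "of_nat (card (selectors n L)) * ennreal ((1/2) ^ card (nodes n L)) = ennreal (2 ^ card (nodes n L) * (1/2) ^ card (nodes n L))"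
    by (simp add: ennreal_mult ennreal_of_nat_eq_real_of_nat)
  also have "\<dots> = 1" by (simp flip: power_mult_distrib)
  finally have "of_nat (card (selectors n L)) * ennreal ((1/2) ^ card (nodes n L)) = 1" .
  moreover have "(\<Sum>u\<in>selectors n L. a) * ennreal ((1/2) ^ card (nodes n L))
      = a * (of_nat (card (selectors n L)) * ennreal ((1/2) ^ card (nodes n L)))"
    by (simp add: ac_simps)
  ultimately show ?thesis by simp
qed

definition selected_noise :: "outcome \<Rightarrow> nat \<Rightarrow> nat list \<Rightarrow> real" where
  "selected_noise \<omega> k js = fst \<omega> ((k, take k js), snd \<omega> (k, take k js))"

lemma mutil_eq_sum:
  "1 \<le> l \<Longrightarrow> mutil \<theta> \<sigma> \<omega> l js j
     = \<theta> + (\<Sum>k\<in>{1..<l}. \<sigma> k * selected_noise \<omega> k js) + \<sigma> l * fst \<omega> ((l, js), j)"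
proof (induction l arbitrary: js j)
  case (Suc l)
  show ?case
  proof (cases "l = 0")
    case False
    have "(\<Sum>k\<in>{1..<l}. \<sigma> k * selected_noise \<omega> k (take l js)) = (\<Sum>k\<in>{1..<l}. \<sigma> k * selected_noise \<omega> k js)"
      by (intro sum.cong) (auto simp: selected_noise_def min_def)
    then show ?thesis
      using False Suc.IH[of "take l js"] by (simp add: selected_noise_def)
  qed simp
qed simp

lemma musel_eq_sum:
  assumes "1 \<le> l" "length js = l"
  shows "musel \<theta> \<sigma> \<omega> l js = \<theta> + (\<Sum>k\<in>{1..l}. \<sigma> k * selected_noise \<omega> k js)"
proof -
  have "{1..l} = insert l {1..<l}" using assms by auto
  then show ?thesis
    using assms by (simp add: musel_def mutil_eq_sum selected_noise_def)
qed

definition noise_norm :: "(nat \<Rightarrow> nat) \<Rightarrow> nat \<Rightarrow> outcome \<Rightarrow> real" where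
  "noise_norm n L \<omega> = (\<Sum>d\<in>noise_coords n L. \<bar>fst \<omega> d\<bar>)"

lemma integrable_std_normal: "integrable std_normal (\<lambda>x. x)"
proof -
  have "has_bochner_integral lborel (\<lambda>x. std_normal_density x * x ^ (2 * 0 + 1)) 0"
    by (rule std_normal_moment_odd)
  then show ?thesis
    by (subst integrable_density) (auto simp: has_bochner_integral_iff normal_density_nonneg)
qed

lemma integrable_noise:
  assumes d: "d \<in> noise_coords n L"
  shows "integrable (supersample_space n L) (\<lambda>\<omega>. fst \<omega> d)"
proof -
  interpret S: prob_space "selector_space n L" by (rule prob_space_selector_space)
  have fst: "fst \<in> supersample_space n L \<rightarrow>\<^sub>M noise_space n L"
    by (simp add: supersample_space_eq_pair)
  have "distr (supersample_space n L) (noise_space n L) fst = noise_space n L"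
    unfolding supersample_space_eq_pair by (rule S.distr_pair_fst)
  then have "distr (supersample_space n L) borel (\<lambda>\<omega>. fst \<omega> d) = std_normal"
    using d distr_distr[OF _ fst, of "\<lambda>x. x d" borel]
    by (simp add: comp_def noise_space_def borel_measurable_PiM_std_normal_component
        distr_PiM_std_normal_component)
  moreover have "integrable (distr (supersample_space n L) borel (\<lambda>\<omega>. fst \<omega> d)) (\<lambda>x. x)
      \<longleftrightarrow> integrable (supersample_space n L) (\<lambda>\<omega>. fst \<omega> d)"
    by (rule integrable_distr_eq) auto
  ultimately show ?thesis using integrable_std_normal by simp
qed

lemma abs_noise_le_noise_norm:
  "c \<in> nodes n L \<Longrightarrow> j \<in> {1, 2} \<Longrightarrow> \<bar>fst \<omega> (c, j)\<bar> \<le> noise_norm n L \<omega>"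
  unfolding noise_norm_def
  by (rule member_le_sum[OF _ _ finite_noise_coords, of "(c, j)"]) (auto simp: noise_coords_def)

lemma integrable_if_AE_abs_le_noise_norm:
  assumes [measurable]: "f \<in> borel_measurable (supersample_space n L)"
    and bound: "AE \<omega> in supersample_space n L. \<bar>f \<omega>\<bar> \<le> a + b * noise_norm n L \<omega>"
  shows "integrable (supersample_space n L) f"
proof (rule Bochner_Integration.integrable_bound)
  interpret prob_space "supersample_space n L" by (rule prob_space_supersample_space)
  have "integrable (supersample_space n L) (noise_norm n L)"
    unfolding noise_norm_def[abs_def] using integrable_noise
    by (intro Bochner_Integration.integrable_sum Bochner_Integration.integrable_abs) auto
  then show "integrable (supersample_space n L) (\<lambda>\<omega>. a + b * noise_norm n L \<omega>)"
    by (intro Bochner_Integration.integrable_add integrable_mult_right) auto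
  show "AE \<omega> in supersample_space n L. norm (f \<omega>) \<le> norm (a + b * noise_norm n L \<omega>)"
    using bound by eventually_elim auto
qed simp

section \<open>Flipping a selector\<close>

definition flip_selector :: "nat \<times> nat list \<Rightarrow> outcome \<Rightarrow> outcome" where
  "flip_selector c \<omega> = (fst \<omega>, (snd \<omega>)(c := 3 - snd \<omega> c))"

lemma measurable_flip_selector[measurable]:
  assumes c: "c \<in> nodes n L"
  shows "flip_selector c \<in> supersample_space n L \<rightarrow>\<^sub>M supersample_space n L"
proof -
  have "(\<lambda>\<omega>. (snd \<omega>)(c := 3 - snd \<omega> c)) \<in> supersample_space n L \<rightarrow>\<^sub>M selector_space n L"
    unfolding selector_space_def
  proof (rule measurable_PiM_single')
    fix i
    have "(\<lambda>\<omega>. if i = c then 3 - snd \<omega> c else snd \<omega> i) \<in> supersample_space n L \<rightarrow>\<^sub>M count_space UNIV"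
      by measurable
    then show "(\<lambda>\<omega>. ((snd \<omega>)(c := 3 - snd \<omega> c)) i) \<in> supersample_space n L \<rightarrow>\<^sub>M fair_selector"
      by (simp cong: measurable_cong_sets)
  qed (use c in \<open>auto simp: space_supersample_space PiE_def extensional_def\<close>)
  then show ?thesis
    unfolding flip_selector_def by (subst (2) supersample_space_eq_pair) (rule measurable_Pair; simp add: supersample_space_eq_pair)
qed

lemma bij_betw_flip_selectors:
  assumes c: "c \<in> nodes n L"
  shows "bij_betw (\<lambda>u. u(c := 3 - u c)) (selectors n L) (selectors n L)"
proof -
  have "u(c := 3 - u c) \<in> selectors n L" and "(u(c := 3 - u c))(c := 3 - (u(c := 3 - u c)) c) = u"
    if "u \<in> selectors n L" for u
    using that c selectors_12[OF that c] by (auto simp: selectors_def PiE_iff extensional_def fun_eq_iff)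
  then show ?thesis by (intro bij_betwI[where g = "\<lambda>u. u(c := 3 - u c)"]) auto
qed

lemma nn_integral_flip_selector:
  assumes c: "c \<in> nodes n L" and h[measurable]: "h \<in> borel_measurable (supersample_space n L)"
  shows "(\<integral>\<^sup>+\<omega>. h (flip_selector c \<omega>) \<partial>supersample_space n L) = (\<integral>\<^sup>+\<omega>. h \<omega> \<partial>supersample_space n L)"
proof -
  have "(\<lambda>\<omega>. h (flip_selector c \<omega>)) \<in> borel_measurable (supersample_space n L)"
    using c by measurable
  then have "(\<integral>\<^sup>+\<omega>. h (flip_selector c \<omega>) \<partial>supersample_space n L)
     = (\<Sum>u\<in>selectors n L. \<integral>\<^sup>+x. h (x, u(c := 3 - u c)) \<partial>noise_space n L) * ennreal ((1/2) ^ card (nodes n L))"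
    by (simp add: nn_integral_supersample_space flip_selector_def)
  also have "(\<Sum>u\<in>selectors n L. \<integral>\<^sup>+x. h (x, u(c := 3 - u c)) \<partial>noise_space n L)
      = (\<Sum>u\<in>selectors n L. \<integral>\<^sup>+x. h (x, u) \<partial>noise_space n L)"
    by (rule sum.reindex_bij_betw[OF bij_betw_flip_selectors[OF c]])
  finally show ?thesis by (simp add: nn_integral_supersample_space)
qed

lemma emeasure_flip_selector_vimage:
  assumes c: "c \<in> nodes n L" and S: "S \<in> sets (supersample_space n L)"
  shows "emeasure (supersample_space n L) (flip_selector c -` S \<inter> space (supersample_space n L))
       = emeasure (supersample_space n L) S"
proof -
  have "flip_selector c -` S \<inter> space (supersample_space n L) \<in> sets (supersample_space n L)"
    using c S by measurable
  then have "emeasure (supersample_space n L) (flip_selector c -` S \<inter> space (supersample_space n L))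
      = (\<integral>\<^sup>+\<omega>. indicator (flip_selector c -` S \<inter> space (supersample_space n L)) \<omega> \<partial>supersample_space n L)"
    by simp
  also have "\<dots> = (\<integral>\<^sup>+\<omega>. indicator S (flip_selector c \<omega>) \<partial>supersample_space n L)"
    by (intro nn_integral_cong) (auto simp: indicator_def)
  also have "\<dots> = emeasure (supersample_space n L) S"
    using S by (simp add: nn_integral_flip_selector[OF c])
  finally show ?thesis .
qed

lemma selected_noise_flip_selector:
  "length is' = l \<Longrightarrow> selected_noise (flip_selector (l, is') \<omega>) k js
     = (if k = l \<and> take l js = is' then fst \<omega> ((l, is'), 3 - snd \<omega> (l, is')) else selected_noise \<omega> k js)"
  by (auto simp: selected_noise_def flip_selector_def)

lemma mutil_flip_selector:
  assumes "length is' = l" "k \<le> l"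
  shows "mutil \<theta> \<sigma> (flip_selector (l, is') \<omega>) k js j = mutil \<theta> \<sigma> \<omega> k js j"
proof (cases "k = 0")
  case False
  have "(\<Sum>k'\<in>{1..<k}. \<sigma> k' * selected_noise (flip_selector (l, is') \<omega>) k' js)
      = (\<Sum>k'\<in>{1..<k}. \<sigma> k' * selected_noise \<omega> k' js)"
    using assms by (intro sum.cong) (auto simp: selected_noise_flip_selector)
  then show ?thesis using False by (simp add: mutil_eq_sum) (simp add: flip_selector_def)
qed simp

lemma musel_flip_selector:
  assumes "length is' = l" "l \<in> {1..L}" "length js = L"
  shows "musel \<theta> \<sigma> (flip_selector (l, is') \<omega>) L js = musel \<theta> \<sigma> \<omega> L js +
     (if take l js = is' then \<sigma> l * (fst \<omega> ((l, is'), 3 - snd \<omega> (l, is')) - fst \<omega> ((l, is'), snd \<omega> (l, is'))) else 0)"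
proof -
  define D where "D = (if take l js = is'
    then \<sigma> l * (fst \<omega> ((l, is'), 3 - snd \<omega> (l, is')) - fst \<omega> ((l, is'), snd \<omega> (l, is'))) else 0)"
  have "\<sigma> k * selected_noise (flip_selector (l, is') \<omega>) k js
      = \<sigma> k * selected_noise \<omega> k js + (if k = l then D else 0)" for k
  proof (cases "k = l \<and> take l js = is'")
    case True
    then have "selected_noise \<omega> k js = fst \<omega> ((l, is'), snd \<omega> (l, is'))"
      by (simp add: selected_noise_def)
    then show ?thesis
      using True assms(1) by (simp add: selected_noise_flip_selector D_def right_diff_distrib)
  qed (use assms(1) in \<open>auto simp: selected_noise_flip_selector D_def\<close>)
  then have "(\<Sum>k\<in>{1..L}. \<sigma> k * selected_noise (flip_selector (l, is') \<omega>) k js)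
      = (\<Sum>k\<in>{1..L}. \<sigma> k * selected_noise \<omega> k js) + D"
    using assms(2) by (simp add: sum.distrib)
  then show ?thesis
    using assms by (simp add: musel_eq_sum D_def)
qed

lemma hypW_flip_selector:
  assumes is': "is' \<in> idx n l" and l: "l \<in> {1..L}" and n_pos: "\<And>k. k \<in> {1..L} \<Longrightarrow> n k \<ge> 1"
  shows "hypW n L \<theta> \<sigma> (flip_selector (l, is') \<omega>) = hypW n L \<theta> \<sigma> \<omega> +
     \<sigma> l * (fst \<omega> ((l, is'), 3 - snd \<omega> (l, is')) - fst \<omega> ((l, is'), snd \<omega> (l, is'))) / real (NN n l)"
proof -
  define D where "D = \<sigma> l * (fst \<omega> ((l, is'), 3 - snd \<omega> (l, is')) - fst \<omega> ((l, is'), snd \<omega> (l, is')))"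
  define C where "C = {js \<in> idx n L. take l js = is'}"
  have "(\<Sum>js\<in>idx n L. musel \<theta> \<sigma> (flip_selector (l, is') \<omega>) L js)
      = (\<Sum>js\<in>idx n L. musel \<theta> \<sigma> \<omega> L js + (if take l js = is' then D else 0))"
    using is' l by (intro sum.cong refl) (auto simp: idx_def D_def musel_flip_selector)
  also have "\<dots> = (\<Sum>js\<in>idx n L. musel \<theta> \<sigma> \<omega> L js) + real (card C) * D"
    using sum.inter_filter[OF finite_idx, where g = "\<lambda>_. D" and P = "\<lambda>js. take l js = is'"]
    by (simp add: sum.distrib C_def)
  finally have sum: "(\<Sum>js\<in>idx n L. musel \<theta> \<sigma> (flip_selector (l, is') \<omega>) L js)
      = (\<Sum>js\<in>idx n L. musel \<theta> \<sigma> \<omega> L js) + real (card C) * D" .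
  have "real (card C) * real (NN n l) = real (NN n L)"
    using card_descendants_idx[OF is', of L] l unfolding C_def of_nat_mult[symmetric] by simp
  moreover have "real (NN n l) > 0" "real (NN n L) > 0"
    using NN_pos[of l n] NN_pos[of L n] n_pos l by auto
  ultimately have "real (card C) * D / real (NN n L) = D / real (NN n l)"
    by (simp add: field_simps)
  then show ?thesis by (simp add: hypW_def sum D_def add_divide_distrib)
qed

section \<open>The Wasserstein term at a fixed node\<close>

lemma space_SXT: "space SXT = UNIV"
  by (simp add: SXT_def space_pair_measure)

lemma space_SXU: "space SXU = UNIV"
  by (simp add: SXU_def SXT_def space_pair_measure)

lemma fst_measurable_SXU[measurable]: "fst \<in> SXU \<rightarrow>\<^sub>M SXT"
  by (simp add: SXU_def SXT_def)

lemma snd_measurable_SXU[measurable]: "snd \<in> SXU \<rightarrow>\<^sub>M count_space UNIV"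
  by (simp add: SXU_def)

lemma Pair_measurable_SXU[measurable]: "(\<lambda>t. (t, u)) \<in> SXT \<rightarrow>\<^sub>M SXU"
  unfolding SXU_def SXT_def by measurable

lemma Times_singleton_in_sets_SXU: "A \<in> sets SXT \<Longrightarrow> A \<times> {u} \<in> sets SXU"
  unfolding SXU_def SXT_def by (intro pair_measureI) auto

locale supersample_node =
  fixes n :: "nat \<Rightarrow> nat" and L :: nat and \<theta> :: real and \<sigma> :: "nat \<Rightarrow> real"
    and l :: nat and is' :: "nat list"
  assumes node_idx: "is' \<in> idx n l" and level: "l \<in> {1..L}"
    and n_pos: "\<And>k. k \<in> {1..L} \<Longrightarrow> n k \<ge> 1"
begin

abbreviation "M \<equiv> supersample_space n L"
abbreviation "c \<equiv> (l, is')"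
abbreviation "X \<equiv> XT \<theta> \<sigma> l is'"
abbreviation "Y \<equiv> XU \<theta> \<sigma> l is'"
abbreviation "W \<equiv> hypW n L \<theta> \<sigma>"
abbreviation "PX \<equiv> distr M SXT X"
abbreviation "PY \<equiv> distr M SXU Y"

text \<open>Moving the selector of the node from 1 to 2 moves \<open>W\<close> by \<open>W_shift (X \<omega>)\<close>.\<close>

definition W_shift :: "real \<times> real \<Rightarrow> real" where
  "W_shift t = (snd t - fst t) / real (NN n l)"

lemma node_in_nodes: "c \<in> nodes n L"
  using node_idx level by (simp add: nodes_def)

lemma length_node_idx: "length is' = l"
  using node_idx by (simp add: idx_def)

lemma X_measurable[measurable]: "X \<in> M \<rightarrow>\<^sub>M SXT"
  unfolding XT_def[abs_def] SXT_def by measurable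

lemma Y_measurable[measurable]: "Y \<in> M \<rightarrow>\<^sub>M SXU"
  unfolding XU_def[abs_def] SXU_def by measurable

lemma W_shift_measurable[measurable]: "W_shift \<in> borel_measurable SXT"
  unfolding W_shift_def[abs_def] SXT_def by measurable

lemma prob_space_PX: "prob_space PX"
  by (intro prob_space.prob_space_distr prob_space_supersample_space X_measurable)

lemma distr_PY_fst: "distr PY SXT fst = PX"
  by (subst distr_distr) (auto simp: comp_def XU_def XT_def[abs_def])

lemma X_flip_selector: "X (flip_selector c \<omega>) = X \<omega>"
  using length_node_idx by (simp add: XT_def mutil_flip_selector)

lemma selector_flip_selector: "snd (flip_selector c \<omega>) c = 3 - snd \<omega> c"
  by (simp add: flip_selector_def)

lemma Y_flip_selector: "Y (flip_selector c \<omega>) = (X \<omega>, 3 - snd \<omega> c)"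
  using X_flip_selector[of \<omega>] by (simp add: XU_def XT_def selector_flip_selector)

lemma X_diff: "snd (X \<omega>) - fst (X \<omega>) = \<sigma> l * (fst \<omega> (c, 2) - fst \<omega> (c, 1))"
  using level by (simp add: XT_def mutil_eq_sum right_diff_distrib)

lemma W_flip_selector_1: "snd \<omega> c = 1 \<Longrightarrow> W (flip_selector c \<omega>) = W \<omega> + W_shift (X \<omega>)"
  using hypW_flip_selector[OF node_idx level n_pos, of \<theta> \<sigma> \<omega>] X_diff[of \<omega>]
  by (simp add: W_shift_def)

lemma nn_integral_selector_eq_half:
  assumes f[measurable]: "f \<in> borel_measurable SXT" and u: "u \<in> {1, 2}"
  shows "(\<integral>\<^sup>+\<omega>. indicator {\<omega>. snd \<omega> c = u} \<omega> * f (X \<omega>) \<partial>M) = (\<integral>\<^sup>+\<omega>. f (X \<omega>) \<partial>M) / 2"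
proof -
  let ?I = "\<lambda>v. \<integral>\<^sup>+\<omega>. indicator {\<omega>. snd \<omega> c = v} \<omega> * f (X \<omega>) \<partial>M"
  have [measurable]: "(\<lambda>\<omega>. indicator {\<omega>. snd \<omega> c = v} \<omega> * f (X \<omega>)) \<in> borel_measurable M" for v
  proof -
    have "(\<lambda>\<omega>. indicator {v} (snd \<omega> c) :: ennreal) \<in> borel_measurable M"
      by (rule measurable_compose[OF measurable_selector]) simp
    moreover have "(\<lambda>\<omega>. indicator {\<omega>. snd \<omega> c = v} \<omega> :: ennreal) = (\<lambda>\<omega>. indicator {v} (snd \<omega> c))"
      by (auto simp: indicator_def)
    ultimately show ?thesis by simp
  qed
  have "?I 2 = (\<integral>\<^sup>+\<omega>. indicator {\<omega>. snd \<omega> c = 2} (flip_selector c \<omega>) * f (X (flip_selector c \<omega>)) \<partial>M)"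
    by (rule nn_integral_flip_selector[OF node_in_nodes, symmetric]) measurable
  also have "\<dots> = ?I 1"
    by (intro nn_integral_cong) (auto simp: X_flip_selector selector_flip_selector indicator_def)
  finally have I21: "?I 2 = ?I 1" .
  have "?I 1 + ?I 2 = (\<integral>\<^sup>+\<omega>. indicator {\<omega>. snd \<omega> c = 1} \<omega> * f (X \<omega>) + indicator {\<omega>. snd \<omega> c = 2} \<omega> * f (X \<omega>) \<partial>M)"
    by (rule nn_integral_add[symmetric]) auto
  also have "\<dots> = (\<integral>\<^sup>+\<omega>. f (X \<omega>) \<partial>M)"
    using AE_selector_12[OF node_in_nodes] by (intro nn_integral_cong_AE) (auto simp: indicator_def)
  finally have "?I 1 = (\<integral>\<^sup>+\<omega>. f (X \<omega>) \<partial>M) / 2"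
    using I21 ennreal_add_self_div_2[of "?I 1"] by simp
  then show ?thesis using u I21 by auto
qed

lemma set_nn_integral_PY:
  assumes A: "A \<in> sets SXT" and u: "u \<in> {1, 2}" and h[measurable]: "h \<in> borel_measurable SXU"
  shows "(\<integral>\<^sup>+x. indicator (A \<times> {u}) x * h x \<partial>PY) = (\<integral>\<^sup>+t. indicator A t * h (t, u) \<partial>PX) / 2"
proof -
  have Au: "A \<times> {u} \<in> sets SXU" using A by (rule Times_singleton_in_sets_SXU)
  have "(\<integral>\<^sup>+x. indicator (A \<times> {u}) x * h x \<partial>PY) = (\<integral>\<^sup>+\<omega>. indicator (A \<times> {u}) (Y \<omega>) * h (Y \<omega>) \<partial>M)"
    using Au by (subst nn_integral_distr) auto
  also have "\<dots> = (\<integral>\<^sup>+\<omega>. indicator {\<omega>. snd \<omega> c = u} \<omega> * (indicator A (X \<omega>) * h (X \<omega>, u)) \<partial>M)"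
    by (intro nn_integral_cong) (auto simp: XU_def XT_def indicator_def)
  also have "\<dots> = (\<integral>\<^sup>+\<omega>. indicator A (X \<omega>) * h (X \<omega>, u) \<partial>M) / 2"
    using A u by (intro nn_integral_selector_eq_half) auto
  also have "(\<integral>\<^sup>+\<omega>. indicator A (X \<omega>) * h (X \<omega>, u) \<partial>M) = (\<integral>\<^sup>+t. indicator A t * h (t, u) \<partial>PX)"
    using A by (subst nn_integral_distr) auto
  finally show ?thesis .
qed

lemma emeasure_selector_2_eq_shifted_selector_1:
  assumes A: "A \<in> sets SXT" and B: "B \<in> sets borel"
  defines "C \<equiv> {p \<in> space (SXU \<Otimes>\<^sub>M borel). fst (fst p) \<in> A \<and> snd (fst p) = 1 \<and> snd p + W_shift (fst (fst p)) \<in> B}"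
  shows "C \<in> sets (SXU \<Otimes>\<^sub>M borel)"
    and "emeasure M {\<omega>\<in>space M. Y \<omega> \<in> A \<times> {2} \<and> W \<omega> \<in> B} = emeasure M {\<omega>\<in>space M. (Y \<omega>, W \<omega>) \<in> C}"
proof -
  show C: "C \<in> sets (SXU \<Otimes>\<^sub>M borel)"
    unfolding C_def using A B by measurable
  let ?S = "{\<omega>\<in>space M. Y \<omega> \<in> A \<times> {2} \<and> W \<omega> \<in> B}"
  have S: "?S \<in> sets M" using A B Times_singleton_in_sets_SXU by measurable
  have "flip_selector c -` ?S \<inter> space M = {\<omega>\<in>space M. (Y \<omega>, W \<omega>) \<in> C}"
  proof (intro set_eqI iffI)
    fix \<omega> assume \<omega>: "\<omega> \<in> flip_selector c -` ?S \<inter> space M"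
    then have "X \<omega> \<in> A" "snd \<omega> c = 1" "W (flip_selector c \<omega>) \<in> B"
      by (auto simp: Y_flip_selector)
    then show "\<omega> \<in> {\<omega>\<in>space M. (Y \<omega>, W \<omega>) \<in> C}"
      using \<omega> W_flip_selector_1 by (auto simp: C_def XU_def XT_def space_pair_measure space_SXU)
  next
    fix \<omega> assume \<omega>: "\<omega> \<in> {\<omega>\<in>space M. (Y \<omega>, W \<omega>) \<in> C}"
    then have "X \<omega> \<in> A" "snd \<omega> c = 1" "W \<omega> + W_shift (X \<omega>) \<in> B"
      by (auto simp: C_def XU_def XT_def)
    then show "\<omega> \<in> flip_selector c -` ?S \<inter> space M"
      using \<omega> measurable_space[OF measurable_flip_selector[OF node_in_nodes]]
      by (auto simp: Y_flip_selector W_flip_selector_1)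
  qed
  then show "emeasure M ?S = emeasure M {\<omega>\<in>space M. (Y \<omega>, W \<omega>) \<in> C}"
    using emeasure_flip_selector_vimage[OF node_in_nodes S] by simp
qed

lemma nn_integral_abs_W_shift:
  "(\<integral>\<^sup>+\<omega>. ennreal (\<bar>W_shift (X \<omega>)\<bar> / 2) \<partial>M) = ennreal (\<bar>\<sigma> l\<bar> / (sqrt pi * real (NN n l)))"
proof -
  have N: "real (NN n l) > 0" using NN_pos[of l n] n_pos level by auto
  have "(\<integral>\<^sup>+\<omega>. ennreal (\<bar>W_shift (X \<omega>)\<bar> / 2) \<partial>M)
      = (\<integral>\<^sup>+\<omega>. ennreal (\<bar>\<sigma> l\<bar> / (2 * real (NN n l))) * ennreal \<bar>fst \<omega> (c, 1) - fst \<omega> (c, 2)\<bar> \<partial>M)"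
  proof (intro nn_integral_cong)
    fix \<omega>
    have eq: "\<bar>W_shift (X \<omega>)\<bar> / 2 = \<bar>\<sigma> l\<bar> / (2 * real (NN n l)) * \<bar>fst \<omega> (c, 1) - fst \<omega> (c, 2)\<bar>"
      using N by (simp add: W_shift_def X_diff abs_mult abs_minus_commute[of "fst \<omega> (c, 2)"])
    show "ennreal (\<bar>W_shift (X \<omega>)\<bar> / 2)
        = ennreal (\<bar>\<sigma> l\<bar> / (2 * real (NN n l))) * ennreal \<bar>fst \<omega> (c, 1) - fst \<omega> (c, 2)\<bar>"
      by (subst ennreal_mult[symmetric]) (use eq N in simp_all)
  qed
  also have "\<dots> = ennreal (\<bar>\<sigma> l\<bar> / (2 * real (NN n l))) * ennreal (2 / sqrt pi)"
    using nn_integral_abs_noise_diff[OF node_in_nodes] by (subst nn_integral_cmult) simp_all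
  also have "\<dots> = ennreal (\<bar>\<sigma> l\<bar> / (sqrt pi * real (NN n l)))"
    using N by (simp add: ennreal_mult[symmetric])
  finally show ?thesis .
qed

end

locale supersample_node_cond_laws = supersample_node +
  fixes \<kappa>1 :: "(real \<times> real) \<times> nat \<Rightarrow> real measure" and \<kappa>2 :: "real \<times> real \<Rightarrow> real measure"
  assumes cond_law_XU: "is_cond_law (supersample_space n L) SXU (XU \<theta> \<sigma> l is') (hypW n L \<theta> \<sigma>) \<kappa>1"
    and cond_law_XT: "is_cond_law (supersample_space n L) SXT (XT \<theta> \<sigma> l is') (hypW n L \<theta> \<sigma>) \<kappa>2"
begin

lemma kernel_measurable[measurable]:
  "\<kappa>1 \<in> SXU \<rightarrow>\<^sub>M prob_algebra borel" "\<kappa>2 \<in> SXT \<rightarrow>\<^sub>M prob_algebra borel"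
  using cond_law_XU cond_law_XT by (simp_all add: is_cond_law_def)

lemma kernel_prob_space:
  "prob_space (\<kappa>1 x)" "sets (\<kappa>1 x) = sets borel" "space (\<kappa>1 x) = UNIV"
  "prob_space (\<kappa>2 t)" "sets (\<kappa>2 t) = sets borel"
  using prob_kernel_borelD[OF kernel_measurable(1), of x] prob_kernel_borelD[OF kernel_measurable(2), of t]
  by (auto simp: space_SXU space_SXT)

lemma emeasure_kernel_measurable[measurable]:
  assumes "B \<in> sets borel"
  shows "(\<lambda>x. emeasure (\<kappa>1 x) B) \<in> borel_measurable SXU" "(\<lambda>t. emeasure (\<kappa>2 t) B) \<in> borel_measurable SXT"
  using assms measurable_emeasure_kernel[OF measurable_prob_algebraD[OF kernel_measurable(1)]]
    measurable_emeasure_kernel[OF measurable_prob_algebraD[OF kernel_measurable(2)]] by auto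

lemma emeasure_translate_kernel_measurable[measurable]:
  assumes "B \<in> sets borel"
  shows "(\<lambda>x. emeasure (translate_measure (W_shift (fst x)) (\<kappa>1 x)) B) \<in> borel_measurable SXU"
proof -
  have K: "(\<lambda>x. translate_measure (W_shift (fst x)) (\<kappa>1 x)) \<in> SXU \<rightarrow>\<^sub>M prob_algebra borel"
    unfolding translate_measure_def
    by (rule measurable_distr_prob_space2[OF kernel_measurable(1)]) (simp add: case_prod_beta')
  show ?thesis
    using measurable_emeasure_kernel[OF measurable_prob_algebraD[OF K] assms] by simp
qed

lemma set_nn_integral_kernel_2_eq_translate:
  assumes A: "A \<in> sets SXT" and B: "B \<in> sets borel"
  shows "(\<integral>\<^sup>+t. indicator A t * emeasure (\<kappa>1 (t, 2)) B \<partial>PX)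
       = (\<integral>\<^sup>+t. indicator A t * emeasure (translate_measure (W_shift t) (\<kappa>1 (t, 1))) B \<partial>PX)"
proof (rule ennreal_div_2_cancel)
  define C where "C = {p \<in> space (SXU \<Otimes>\<^sub>M borel). fst (fst p) \<in> A \<and> snd (fst p) = 1 \<and> snd p + W_shift (fst (fst p)) \<in> B}"
  note C = emeasure_selector_2_eq_shifted_selector_1[OF A B, folded C_def]
  have "(\<integral>\<^sup>+t. indicator A t * emeasure (\<kappa>1 (t, 2)) B \<partial>PX) / 2
      = (\<integral>\<^sup>+x. indicator (A \<times> {2}) x * emeasure (\<kappa>1 x) B \<partial>PY)"
    using A B by (intro set_nn_integral_PY[symmetric]) auto
  also have "\<dots> = emeasure M {\<omega>\<in>space M. Y \<omega> \<in> A \<times> {2} \<and> W \<omega> \<in> B}"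
    using cond_law_XU A B Times_singleton_in_sets_SXU by (simp add: is_cond_law_def)
  also have "\<dots> = (\<integral>\<^sup>+x. emeasure (\<kappa>1 x) (Pair x -` C) \<partial>PY)"
    unfolding C(2) by (rule is_cond_law_emeasure_pair[OF prob_space_supersample_space cond_law_XU
          Y_measurable borel_measurable_hypW C(1)])
  also have "\<dots> = (\<integral>\<^sup>+x. indicator (A \<times> {1}) x * emeasure (translate_measure (W_shift (fst x)) (\<kappa>1 x)) B \<partial>PY)"
  proof (intro nn_integral_cong)
    fix x :: "(real \<times> real) \<times> nat"
    have "Pair x -` C = (if x \<in> A \<times> {1} then {w \<in> space (\<kappa>1 x). w + W_shift (fst x) \<in> B} else {})"
      by (auto simp: C_def space_pair_measure space_SXU mem_Times_iff kernel_prob_space(3))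
    then show "emeasure (\<kappa>1 x) (Pair x -` C)
        = indicator (A \<times> {1}) x * emeasure (translate_measure (W_shift (fst x)) (\<kappa>1 x)) B"
      using B kernel_prob_space(2) by (simp add: emeasure_translate_measure)
  qed
  also have "\<dots> = (\<integral>\<^sup>+t. indicator A t * emeasure (translate_measure (W_shift t) (\<kappa>1 (t, 1))) B \<partial>PX) / 2"
    using A B set_nn_integral_PY[of A 1] by simp
  finally show "(\<integral>\<^sup>+t. indicator A t * emeasure (\<kappa>1 (t, 2)) B \<partial>PX) / 2
      = (\<integral>\<^sup>+t. indicator A t * emeasure (translate_measure (W_shift t) (\<kappa>1 (t, 1))) B \<partial>PX) / 2" .
qed

lemma set_nn_integral_kernel_XT_eq_fair_mix:
  assumes A: "A \<in> sets SXT" and B: "B \<in> sets borel"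
  shows "(\<integral>\<^sup>+t. indicator A t * emeasure (\<kappa>2 t) B \<partial>PX)
       = (\<integral>\<^sup>+t. indicator A t * ((emeasure (\<kappa>1 (t, 1)) B + emeasure (\<kappa>1 (t, 2)) B) / 2) \<partial>PX)"
proof -
  have AU: "A \<times> {1} \<in> sets SXU" "A \<times> {2} \<in> sets SXU" using A by (auto intro: Times_singleton_in_sets_SXU)
  define S where "S u = {\<omega>\<in>space M. Y \<omega> \<in> A \<times> {u} \<and> W \<omega> \<in> B}" for u
  have S: "S u \<in> sets M" for u
    unfolding S_def using A B Times_singleton_in_sets_SXU by measurable
  have S_cond_law: "emeasure M (S u) = (\<integral>\<^sup>+t. indicator A t * emeasure (\<kappa>1 (t, u)) B \<partial>PX) / 2"
    if "u \<in> {1, 2}" for u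
    using cond_law_XU AU B that set_nn_integral_PY[OF A that]
    by (auto simp: is_cond_law_def S_def)
  have "(\<integral>\<^sup>+t. indicator A t * emeasure (\<kappa>2 t) B \<partial>PX) = emeasure M {\<omega>\<in>space M. X \<omega> \<in> A \<and> W \<omega> \<in> B}"
    using cond_law_XT A B by (simp add: is_cond_law_def)
  also have "\<dots> = (\<integral>\<^sup>+\<omega>. indicator (S 1) \<omega> + indicator (S 2) \<omega> \<partial>M)"
  proof -
    have XW: "{\<omega>\<in>space M. X \<omega> \<in> A \<and> W \<omega> \<in> B} \<in> sets M" using A B by measurable
    show ?thesis
      unfolding nn_integral_indicator[OF XW, symmetric] using AE_selector_12[OF node_in_nodes]
    proof (intro nn_integral_cong_AE, eventually_elim)
      case (elim \<omega>)
      then show ?case by (auto simp: S_def indicator_def XU_def XT_def)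
    qed
  qed
  also have "\<dots> = emeasure M (S 1) + emeasure M (S 2)"
    using S by (subst nn_integral_add) auto
  also have "\<dots> = (\<integral>\<^sup>+t. indicator A t * emeasure (\<kappa>1 (t, 1)) B / 2 + indicator A t * emeasure (\<kappa>1 (t, 2)) B / 2 \<partial>PX)"
    using A B by (simp add: S_cond_law nn_integral_add nn_integral_divide)
  also have "\<dots> = (\<integral>\<^sup>+t. indicator A t * ((emeasure (\<kappa>1 (t, 1)) B + emeasure (\<kappa>1 (t, 2)) B) / 2) \<partial>PX)"
    by (intro nn_integral_cong) (simp add: divide_ennreal_def distrib_left distrib_right mult.assoc)
  finally show ?thesis .
qed

lemma AE_kernel_2_eq_translate: "AE t in PX. \<kappa>1 (t, 2) = translate_measure (W_shift t) (\<kappa>1 (t, 1))"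
proof (rule AE_kernel_eqI_Rats)
  fix q :: real
  have "(\<lambda>t. emeasure (\<kappa>1 (t, 2)) {..q}) \<in> borel_measurable PX"
    "(\<lambda>t. emeasure (translate_measure (W_shift t) (\<kappa>1 (t, 1))) {..q}) \<in> borel_measurable PX"
    using measurable_compose[OF Pair_measurable_SXU emeasure_kernel_measurable(1), of "{..q}" 2]
      measurable_compose[OF Pair_measurable_SXU emeasure_translate_kernel_measurable, of "{..q}" 1]
    by simp_all
  then show "AE t in PX. emeasure (\<kappa>1 (t, 2)) {..q} = emeasure (translate_measure (W_shift t) (\<kappa>1 (t, 1))) {..q}"
    by (rule AE_eq_if_set_nn_integrals_eq[OF prob_space_PX]) (simp add: set_nn_integral_kernel_2_eq_translate)
qed (simp_all add: kernel_prob_space prob_space_translate_measure sets_translate_measure)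

lemma AE_kernel_XT_eq_fair_mix: "AE t in PX. \<kappa>2 t = fair_mix (\<kappa>1 (t, 1)) (\<kappa>1 (t, 2))"
proof (rule AE_kernel_eqI_Rats)
  fix q :: real
  have "(\<lambda>t. emeasure (\<kappa>2 t) {..q}) \<in> borel_measurable PX"
    "(\<lambda>t. (emeasure (\<kappa>1 (t, 1)) {..q} + emeasure (\<kappa>1 (t, 2)) {..q}) / 2) \<in> borel_measurable PX"
    using emeasure_kernel_measurable(2)[of "{..q}"]
      measurable_compose[OF Pair_measurable_SXU emeasure_kernel_measurable(1), of "{..q}" 1]
      measurable_compose[OF Pair_measurable_SXU emeasure_kernel_measurable(1), of "{..q}" 2]
    by simp_all
  then have "AE t in PX. emeasure (\<kappa>2 t) {..q} = (emeasure (\<kappa>1 (t, 1)) {..q} + emeasure (\<kappa>1 (t, 2)) {..q}) / 2"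
    by (rule AE_eq_if_set_nn_integrals_eq[OF prob_space_PX]) (simp add: set_nn_integral_kernel_XT_eq_fair_mix)
  then show "AE t in PX. emeasure (\<kappa>2 t) {..q} = emeasure (fair_mix (\<kappa>1 (t, 1)) (\<kappa>1 (t, 2))) {..q}"
    by (simp add: emeasure_fair_mix[OF kernel_prob_space(1,2) kernel_prob_space(1,2)])
qed (simp_all add: kernel_prob_space prob_space_fair_mix[OF kernel_prob_space(1,2) kernel_prob_space(1,2)]
    sets_fair_mix[OF kernel_prob_space(1,2) kernel_prob_space(1,2)])

lemma AE_wasserstein1_le_W_shift:
  "AE x in PY. wasserstein1 (\<kappa>1 x) (\<kappa>2 (fst x)) \<le> ennreal (\<bar>W_shift (fst x)\<bar> / 2)"
proof -
  have fst: "fst \<in> PY \<rightarrow>\<^sub>M SXT" by simp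
  have "AE x in PY. \<kappa>1 (fst x, 2) = translate_measure (W_shift (fst x)) (\<kappa>1 (fst x, 1))
      \<and> \<kappa>2 (fst x) = fair_mix (\<kappa>1 (fst x, 1)) (\<kappa>1 (fst x, 2))"
    using AE_conj_iff[THEN iffD2, OF conjI[OF AE_kernel_2_eq_translate AE_kernel_XT_eq_fair_mix]]
    unfolding distr_PY_fst[symmetric] by (rule AE_distrD[OF fst])
  moreover have "AE x in PY. snd x \<in> {1, 2}"
  proof -
    have "{x \<in> space SXU. snd x \<in> {1, 2}} \<in> sets SXU"
      using measurable_sets[OF snd_measurable_SXU, of "{1, 2}"] by (simp add: vimage_def Int_def conj_commute)
    then show ?thesis
      using AE_selector_12[OF node_in_nodes] by (subst AE_distr_iff) (auto simp: XU_def)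
  qed
  ultimately show ?thesis
  proof eventually_elim
    case (elim x)
    obtain t u where x: "x = (t, u)" by (cases x)
    note W1 = wasserstein1_translate_fair_mix_le[OF kernel_prob_space(1,2)[of "(t, 1)"], of "W_shift t"]
    from elim show ?case
      unfolding x using W1 by auto
  qed
qed

lemma nn_integral_wasserstein1_le:
  "(\<integral>\<^sup>+x. wasserstein1 (\<kappa>1 x) (\<kappa>2 (fst x)) \<partial>PY) \<le> ennreal (\<bar>\<sigma> l\<bar> / (sqrt pi * real (NN n l)))"
proof -
  have "(\<integral>\<^sup>+x. wasserstein1 (\<kappa>1 x) (\<kappa>2 (fst x)) \<partial>PY) \<le> (\<integral>\<^sup>+x. ennreal (\<bar>W_shift (fst x)\<bar> / 2) \<partial>PY)"
    by (rule nn_integral_mono_AE[OF AE_wasserstein1_le_W_shift])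
  also have "\<dots> = (\<integral>\<^sup>+\<omega>. ennreal (\<bar>W_shift (X \<omega>)\<bar> / 2) \<partial>M)"
    by (subst nn_integral_distr) (auto simp: XU_def XT_def)
  also have "\<dots> = ennreal (\<bar>\<sigma> l\<bar> / (sqrt pi * real (NN n l)))"
    by (rule nn_integral_abs_W_shift)
  finally show ?thesis .
qed

end

section \<open>The generalisation gap\<close>

locale supersample_tree =
  fixes n :: "nat \<Rightarrow> nat" and L :: nat and \<theta> :: real and \<sigma> :: "nat \<Rightarrow> real"
  assumes L_pos: "L \<ge> 1" and n_pos: "\<And>k. k \<in> {1..L} \<Longrightarrow> n k \<ge> 1"
begin

abbreviation "M \<equiv> supersample_space n L"
abbreviation "W \<equiv> hypW n L \<theta> \<sigma>"

text \<open>The leaf below \<open>js\<close> rebuilt from the selected noise of its ancestors up to level \<open>m\<close>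
  and the unselected noise of the deeper ones: for \<open>m = L\<close> it is the training leaf, for \<open>m = 0\<close>
  it is independent of \<open>W\<close> and distributed as a fresh leaf.\<close>

definition swapped_leaf :: "nat \<Rightarrow> nat list \<Rightarrow> outcome \<Rightarrow> real" where
  "swapped_leaf m js \<omega> = \<theta> + (\<Sum>k\<in>{1..L}. \<sigma> k * fst \<omega> ((k, take k js),
      if k \<le> m then snd \<omega> (k, take k js) else 3 - snd \<omega> (k, take k js)))"

definition swap_cost :: "nat \<Rightarrow> real" where
  "swap_cost m = 2 * \<bar>\<sigma> m\<bar> / (sqrt pi * real (NN n m))"

lemma NN_L_pos: "real (NN n L) > 0"
  using NN_pos[of L n] n_pos by simp

lemma swap_cost_nonneg: "swap_cost m \<ge> 0"
  by (simp add: swap_cost_def)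

lemma borel_measurable_swapped_leaf[measurable]: "swapped_leaf m js \<in> borel_measurable M"
proof -
  have "(\<lambda>\<omega>. fst \<omega> (c, f (snd \<omega> c))) \<in> borel_measurable M" for c and f :: "nat \<Rightarrow> nat"
    by (rule measurable_compose_countable[where f = "\<lambda>j \<omega>. fst \<omega> (c, f j)"]) measurable
  then show ?thesis
    unfolding swapped_leaf_def[abs_def] by measurable
qed

lemma swapped_leaf_L: "length js = L \<Longrightarrow> swapped_leaf L js \<omega> = musel \<theta> \<sigma> \<omega> L js"
  using L_pos by (simp add: swapped_leaf_def musel_eq_sum selected_noise_def)

lemma swapped_leaf_flip_selector:
  assumes m: "m \<in> {1..L}" and u: "snd \<omega> (m, take m js) \<in> {1, 2}"
  shows "swapped_leaf (m - 1) js (flip_selector (m, take m js) \<omega>) = swapped_leaf m js \<omega>"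
  unfolding swapped_leaf_def
proof (intro arg_cong2[where f = "(+)"] refl sum.cong)
  fix k assume "k \<in> {1..L}"
  then show "\<sigma> k * fst (flip_selector (m, take m js) \<omega>) ((k, take k js),
        if k \<le> m - 1 then snd (flip_selector (m, take m js) \<omega>) (k, take k js)
        else 3 - snd (flip_selector (m, take m js) \<omega>) (k, take k js))
      = \<sigma> k * fst \<omega> ((k, take k js), if k \<le> m then snd \<omega> (k, take k js) else 3 - snd \<omega> (k, take k js))"
    using m u by (cases "k = m") (auto simp: flip_selector_def)
qed

lemma abs_swapped_leaf_le:
  assumes js: "js \<in> idx n L" and \<omega>: "\<forall>c\<in>nodes n L. snd \<omega> c \<in> {1, 2}"
  shows "\<bar>swapped_leaf m js \<omega>\<bar> \<le> \<bar>\<theta>\<bar> + (\<Sum>k\<in>{1..L}. \<bar>\<sigma> k\<bar>) * noise_norm n L \<omega>"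
proof -
  let ?j = "\<lambda>k. if k \<le> m then snd \<omega> (k, take k js) else 3 - snd \<omega> (k, take k js)"
  have "\<bar>\<Sum>k\<in>{1..L}. \<sigma> k * fst \<omega> ((k, take k js), ?j k)\<bar> \<le> (\<Sum>k\<in>{1..L}. \<bar>\<sigma> k\<bar> * noise_norm n L \<omega>)"
  proof (rule order_trans[OF sum_abs sum_mono])
    fix k assume "k \<in> {1..L}"
    then have node: "(k, take k js) \<in> nodes n L"
      using ancestor_in_nodes[OF js] by simp
    then have "?j k \<in> {1, 2}" using \<omega> by auto
    then show "\<bar>\<sigma> k * fst \<omega> ((k, take k js), ?j k)\<bar> \<le> \<bar>\<sigma> k\<bar> * noise_norm n L \<omega>"
      unfolding abs_mult using node by (intro mult_left_mono abs_noise_le_noise_norm) auto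
  qed
  then show ?thesis
    unfolding swapped_leaf_def sum_distrib_right by linarith
qed

lemma abs_W_le:
  assumes \<omega>: "\<forall>c\<in>nodes n L. snd \<omega> c \<in> {1, 2}"
  shows "\<bar>W \<omega>\<bar> \<le> \<bar>\<theta>\<bar> + (\<Sum>k\<in>{1..L}. \<bar>\<sigma> k\<bar>) * noise_norm n L \<omega>"
proof -
  let ?B = "\<bar>\<theta>\<bar> + (\<Sum>k\<in>{1..L}. \<bar>\<sigma> k\<bar>) * noise_norm n L \<omega>"
  have "\<bar>\<Sum>js\<in>idx n L. musel \<theta> \<sigma> \<omega> L js\<bar> \<le> (\<Sum>js\<in>idx n L. ?B)"
    using abs_swapped_leaf_le[OF _ \<omega>, of _ L]
    by (intro order_trans[OF sum_abs sum_mono]) (simp add: idx_def swapped_leaf_L)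
  then show ?thesis
    using NN_L_pos by (simp add: hypW_def card_idx abs_mult divide_le_eq mult.commute)
qed

lemma integrable_abs_W_minus_swapped_leaf:
  assumes js: "js \<in> idx n L"
  shows "integrable M (\<lambda>\<omega>. \<bar>W \<omega> - swapped_leaf m js \<omega>\<bar>)"
proof (rule integrable_if_AE_abs_le_noise_norm[where a = "2 * \<bar>\<theta>\<bar>" and b = "2 * (\<Sum>k\<in>{1..L}. \<bar>\<sigma> k\<bar>)"])
  show "AE \<omega> in M. \<bar>\<bar>W \<omega> - swapped_leaf m js \<omega>\<bar>\<bar>
      \<le> 2 * \<bar>\<theta>\<bar> + 2 * (\<Sum>k\<in>{1..L}. \<bar>\<sigma> k\<bar>) * noise_norm n L \<omega>"
    using AE_selectors_12
  proof eventually_elim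
    case (elim \<omega>)
    then show ?case
      using abs_W_le[OF elim] abs_swapped_leaf_le[OF js elim, of m] by linarith
  qed
qed measurable

lemma abs_W_minus_swapped_leaf_flip_selector_le:
  assumes js: "js \<in> idx n L" and m: "m \<in> {1..L}" and u: "snd \<omega> (m, take m js) \<in> {1, 2}"
  defines "c \<equiv> (m, take m js)"
  shows "\<bar>W (flip_selector c \<omega>) - swapped_leaf (m - 1) js (flip_selector c \<omega>)\<bar>
     \<le> \<bar>W \<omega> - swapped_leaf m js \<omega>\<bar> + \<bar>\<sigma> m\<bar> / real (NN n m) * \<bar>fst \<omega> (c, 1) - fst \<omega> (c, 2)\<bar>"
proof -
  have N: "real (NN n m) > 0" using NN_pos[of m n] n_pos m by auto
  have "\<bar>fst \<omega> (c, 3 - snd \<omega> c) - fst \<omega> (c, snd \<omega> c)\<bar> = \<bar>fst \<omega> (c, 1) - fst \<omega> (c, 2)\<bar>"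
    using u by (auto simp: c_def)
  then have "\<bar>\<sigma> m * (fst \<omega> (c, 3 - snd \<omega> c) - fst \<omega> (c, snd \<omega> c)) / real (NN n m)\<bar>
      = \<bar>\<sigma> m\<bar> / real (NN n m) * \<bar>fst \<omega> (c, 1) - fst \<omega> (c, 2)\<bar>"
    using N by (simp add: abs_mult)
  moreover have "W (flip_selector c \<omega>)
      = W \<omega> + \<sigma> m * (fst \<omega> (c, 3 - snd \<omega> c) - fst \<omega> (c, snd \<omega> c)) / real (NN n m)"
    unfolding c_def using js m by (intro hypW_flip_selector take_in_idx n_pos) auto
  moreover have "swapped_leaf (m - 1) js (flip_selector c \<omega>) = swapped_leaf m js \<omega>"
    unfolding c_def using m u by (rule swapped_leaf_flip_selector)
  ultimately show ?thesis by linarith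
qed

lemma nn_integral_swap_le:
  assumes js: "js \<in> idx n L" and m: "m \<in> {1..L}"
  shows "(\<integral>\<^sup>+\<omega>. ennreal \<bar>W \<omega> - swapped_leaf (m - 1) js \<omega>\<bar> \<partial>M)
      \<le> (\<integral>\<^sup>+\<omega>. ennreal \<bar>W \<omega> - swapped_leaf m js \<omega>\<bar> \<partial>M) + ennreal (swap_cost m)"
proof -
  define c where "c = (m, take m js)"
  have c: "c \<in> nodes n L" using ancestor_in_nodes[OF js m] by (simp add: c_def)
  have N: "real (NN n m) > 0" using NN_pos[of m n] n_pos m by auto
  have "(\<integral>\<^sup>+\<omega>. ennreal \<bar>W \<omega> - swapped_leaf (m - 1) js \<omega>\<bar> \<partial>M)
      = (\<integral>\<^sup>+\<omega>. ennreal \<bar>W (flip_selector c \<omega>) - swapped_leaf (m - 1) js (flip_selector c \<omega>)\<bar> \<partial>M)"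
    by (rule nn_integral_flip_selector[OF c, symmetric]) measurable
  also have "\<dots> \<le> (\<integral>\<^sup>+\<omega>. ennreal \<bar>W \<omega> - swapped_leaf m js \<omega>\<bar>
      + ennreal (\<bar>\<sigma> m\<bar> / real (NN n m)) * ennreal \<bar>fst \<omega> (c, 1) - fst \<omega> (c, 2)\<bar> \<partial>M)"
    using AE_selector_12[OF c]
  proof (intro nn_integral_mono_AE, eventually_elim)
    case (elim \<omega>)
    then show ?case
      using abs_W_minus_swapped_leaf_flip_selector_le[OF js m, of \<omega>] N
      by (simp add: c_def ennreal_mult[symmetric] ennreal_plus[symmetric] del: ennreal_plus)
  qed
  also have "\<dots> = (\<integral>\<^sup>+\<omega>. ennreal \<bar>W \<omega> - swapped_leaf m js \<omega>\<bar> \<partial>M)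
      + ennreal (\<bar>\<sigma> m\<bar> / real (NN n m)) * ennreal (2 / sqrt pi)"
    using nn_integral_abs_noise_diff[OF c] by (simp add: nn_integral_add nn_integral_cmult)
  also have "ennreal (\<bar>\<sigma> m\<bar> / real (NN n m)) * ennreal (2 / sqrt pi) = ennreal (swap_cost m)"
    using N by (simp add: swap_cost_def ennreal_mult[symmetric] mult.commute)
  finally show ?thesis .
qed

lemma nn_integral_swapped_leaf_0_le:
  assumes js: "js \<in> idx n L" and k: "k \<le> L"
  shows "(\<integral>\<^sup>+\<omega>. ennreal \<bar>W \<omega> - swapped_leaf 0 js \<omega>\<bar> \<partial>M)
      \<le> (\<integral>\<^sup>+\<omega>. ennreal \<bar>W \<omega> - swapped_leaf k js \<omega>\<bar> \<partial>M) + ennreal (\<Sum>m\<in>{1..k}. swap_cost m)"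
  using k
proof (induction k)
  case (Suc k)
  have "(\<integral>\<^sup>+\<omega>. ennreal \<bar>W \<omega> - swapped_leaf 0 js \<omega>\<bar> \<partial>M)
      \<le> (\<integral>\<^sup>+\<omega>. ennreal \<bar>W \<omega> - swapped_leaf k js \<omega>\<bar> \<partial>M) + ennreal (\<Sum>m\<in>{1..k}. swap_cost m)"
    using Suc by simp
  also have "\<dots> \<le> (\<integral>\<^sup>+\<omega>. ennreal \<bar>W \<omega> - swapped_leaf (Suc k) js \<omega>\<bar> \<partial>M)
      + ennreal (swap_cost (Suc k)) + ennreal (\<Sum>m\<in>{1..k}. swap_cost m)"
    using nn_integral_swap_le[OF js, of "Suc k"] Suc.prems by (intro add_right_mono) simp
  also have "\<dots> = (\<integral>\<^sup>+\<omega>. ennreal \<bar>W \<omega> - swapped_leaf (Suc k) js \<omega>\<bar> \<partial>M)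
      + ennreal (\<Sum>m\<in>{1..Suc k}. swap_cost m)"
    by (simp add: ennreal_plus[symmetric] sum_nonneg swap_cost_nonneg add.assoc add.commute del: ennreal_plus)
  finally show ?case .
qed simp

definition leaf_of_noise :: "(nat \<Rightarrow> real) \<Rightarrow> real" where
  "leaf_of_noise y = \<theta> + (\<Sum>k\<in>{1..L}. \<sigma> k * y k)"

definition fresh_leaf_dev :: "real \<Rightarrow> ennreal" where
  "fresh_leaf_dev w = (\<integral>\<^sup>+y. ennreal \<bar>w - leaf_of_noise y\<bar> \<partial>PiM {1..L} (\<lambda>_. std_normal))"

lemma borel_measurable_leaf_of_noise[measurable]:
  "leaf_of_noise \<in> borel_measurable (PiM {1..L} (\<lambda>_. std_normal))"
  unfolding leaf_of_noise_def[abs_def]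
  using borel_measurable_PiM_std_normal_component[of _ "{1..L}"] by measurable

lemma borel_measurable_fresh_leaf_dev[measurable]: "fresh_leaf_dev \<in> borel_measurable borel"
proof -
  interpret sigma_finite_measure "PiM {1..L} (\<lambda>_. std_normal)"
    by (intro prob_space_imp_sigma_finite prob_space_PiM prob_space_std_normal)
  show ?thesis unfolding fresh_leaf_dev_def[abs_def] by measurable
qed

lemma nn_integral_abs_minus_leaf_0:
  "(\<integral>\<^sup>+\<omega>. ennreal \<bar>w - musel \<theta> \<sigma> \<omega> L (replicate L 0)\<bar> \<partial>M) = fresh_leaf_dev w"
proof -
  have noise: "(\<integral>\<^sup>+x. ennreal \<bar>w - musel \<theta> \<sigma> (x, u) L (replicate L 0)\<bar> \<partial>noise_space n L) = fresh_leaf_dev w"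
    if u: "u \<in> selectors n L" for u
  proof -
    define t where "t j = ((j, replicate j (0::nat)), u (j, replicate j 0))" for j
    have nodes: "(j, replicate j 0) \<in> nodes n L" if "j \<in> {1..L}" for j
      using that n_pos by (auto simp: nodes_def intro: replicate_0_in_idx)
    have "t j \<in> noise_coords n L" if "j \<in> {1..L}" for j
      using nodes[OF that] selectors_12[OF u nodes[OF that]] by (simp add: t_def noise_coords_def)
    then have t: "inj_on t {1..L}" "t ` {1..L} \<subseteq> noise_coords n L"
      by (auto simp: t_def inj_on_def)
    have "musel \<theta> \<sigma> (x, u) L (replicate L 0) = leaf_of_noise (\<lambda>j\<in>{1..L}. x (t j))" for x
      using L_pos by (simp add: musel_eq_sum selected_noise_def leaf_of_noise_def t_def min_def)
    moreover have "(\<integral>\<^sup>+x. ennreal \<bar>w - leaf_of_noise (\<lambda>j\<in>{1..L}. x (t j))\<bar> \<partial>noise_space n L) = fresh_leaf_dev w"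
      unfolding noise_space_def fresh_leaf_dev_def
      by (rule nn_integral_PiM_reindex[OF prob_space_std_normal t]) measurable
    ultimately show ?thesis by simp
  qed
  have "(\<integral>\<^sup>+\<omega>. ennreal \<bar>w - musel \<theta> \<sigma> \<omega> L (replicate L 0)\<bar> \<partial>M)
      = (\<Sum>u\<in>selectors n L. \<integral>\<^sup>+x. ennreal \<bar>w - musel \<theta> \<sigma> (x, u) L (replicate L 0)\<bar> \<partial>noise_space n L)
        * ennreal ((1/2) ^ card (nodes n L))"
    by (rule nn_integral_supersample_space) measurable
  also have "\<dots> = (\<Sum>u\<in>selectors n L. fresh_leaf_dev w) * ennreal ((1/2) ^ card (nodes n L))"
    by (intro arg_cong2[where f = "(*)"] sum.cong refl noise)
  finally show ?thesis by (simp only: sum_selectors_const)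
qed

lemma popLoss_eq_fresh_leaf_dev: "ennreal (popLoss n L \<theta> \<sigma> w) = fresh_leaf_dev w"
proof -
  have leaf: "replicate L 0 \<in> idx n L" using n_pos by (intro replicate_0_in_idx) auto
  have "integrable M (\<lambda>\<omega>. \<bar>w - musel \<theta> \<sigma> \<omega> L (replicate L 0)\<bar>)"
  proof (rule integrable_if_AE_abs_le_noise_norm[where a = "\<bar>w\<bar> + \<bar>\<theta>\<bar>" and b = "\<Sum>k\<in>{1..L}. \<bar>\<sigma> k\<bar>"])
    show "AE \<omega> in M. \<bar>\<bar>w - musel \<theta> \<sigma> \<omega> L (replicate L 0)\<bar>\<bar>
        \<le> \<bar>w\<bar> + \<bar>\<theta>\<bar> + (\<Sum>k\<in>{1..L}. \<bar>\<sigma> k\<bar>) * noise_norm n L \<omega>"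
      using AE_selectors_12
    proof eventually_elim
      case (elim \<omega>)
      then show ?case using abs_swapped_leaf_le[OF leaf elim, of L] by (simp add: swapped_leaf_L)
    qed
  qed measurable
  moreover have "popLoss n L \<theta> \<sigma> w = (\<integral>\<omega>. \<bar>w - musel \<theta> \<sigma> \<omega> L (replicate L 0)\<bar> \<partial>M)"
    unfolding popLoss_def by (subst integral_distr) auto
  ultimately show ?thesis
    by (simp add: nn_integral_eq_integral[symmetric] nn_integral_abs_minus_leaf_0)
qed

lemma hypW_eq_if_selected_noise_eq:
  assumes "\<And>c. c \<in> nodes n L \<Longrightarrow> x (c, u c) = y (c, u c)"
  shows "W (x, u) = W (y, u)"
  unfolding hypW_def
proof (intro arg_cong2[where f = "(*)"] refl sum.cong)
  fix js assume js: "js \<in> idx n L"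
  have "selected_noise (x, u) k js = selected_noise (y, u) k js" if "k \<in> {1..L}" for k
    using assms ancestor_in_nodes[OF js that] by (simp add: selected_noise_def)
  then show "musel \<theta> \<sigma> (x, u) L js = musel \<theta> \<sigma> (y, u) L js"
    using js L_pos by (simp add: musel_eq_sum idx_def)
qed

lemma nn_integral_noise_fresh_leaf_dev_W:
  assumes js: "js \<in> idx n L" and u: "u \<in> selectors n L"
  shows "(\<integral>\<^sup>+x. fresh_leaf_dev (W (x, u)) \<partial>noise_space n L)
      = (\<integral>\<^sup>+x. ennreal \<bar>W (x, u) - swapped_leaf 0 js (x, u)\<bar> \<partial>noise_space n L)"
proof -
  define S where "S = (\<lambda>c. (c, u c)) ` nodes n L"
  define t where "t k = ((k, take k js), 3 - u (k, take k js))" for k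
  have S: "S \<subseteq> noise_coords n L"
    using selectors_12[OF u] by (auto simp: S_def noise_coords_def)
  have "t k \<in> noise_coords n L - S" if "k \<in> {1..L}" for k
    using ancestor_in_nodes[OF js that] selectors_12[OF u ancestor_in_nodes[OF js that]]
    by (auto simp: t_def S_def noise_coords_def)
  then have t: "inj_on t {1..L}" "t ` {1..L} \<subseteq> noise_coords n L - S"
    by (auto simp: t_def inj_on_def)
  have W: "(\<lambda>x. W (x, u)) \<in> borel_measurable (PiM (noise_coords n L) (\<lambda>_. std_normal))"
    using measurable_compose[OF selector_in_space[OF u] borel_measurable_hypW]
    by (simp add: noise_space_def)
  have "swapped_leaf 0 js (x, u) = leaf_of_noise (\<lambda>k\<in>{1..L}. x (t k))" for x
    by (simp add: swapped_leaf_def leaf_of_noise_def t_def)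
  moreover have "(\<integral>\<^sup>+x. ennreal \<bar>W (x, u) - leaf_of_noise (\<lambda>k\<in>{1..L}. x (t k))\<bar> \<partial>noise_space n L)
      = (\<integral>\<^sup>+x. fresh_leaf_dev (W (x, u)) \<partial>noise_space n L)"
    unfolding noise_space_def fresh_leaf_dev_def
    by (rule nn_integral_PiM_indep_reindex[OF prob_space_std_normal finite_noise_coords S t W _
          borel_measurable_leaf_of_noise, where h = "\<lambda>a b. ennreal \<bar>a - b\<bar>"])
      (auto intro: hypW_eq_if_selected_noise_eq simp: S_def)
  ultimately show ?thesis by simp
qed

lemma nn_integral_fresh_leaf_dev_W:
  assumes js: "js \<in> idx n L"
  shows "(\<integral>\<^sup>+\<omega>. fresh_leaf_dev (W \<omega>) \<partial>M) = (\<integral>\<^sup>+\<omega>. ennreal \<bar>W \<omega> - swapped_leaf 0 js \<omega>\<bar> \<partial>M)"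
proof -
  have "(\<integral>\<^sup>+\<omega>. fresh_leaf_dev (W \<omega>) \<partial>M)
      = (\<Sum>u\<in>selectors n L. \<integral>\<^sup>+x. fresh_leaf_dev (W (x, u)) \<partial>noise_space n L) * ennreal ((1/2) ^ card (nodes n L))"
    by (rule nn_integral_supersample_space) measurable
  also have "\<dots> = (\<Sum>u\<in>selectors n L. \<integral>\<^sup>+x. ennreal \<bar>W (x, u) - swapped_leaf 0 js (x, u)\<bar> \<partial>noise_space n L)
      * ennreal ((1/2) ^ card (nodes n L))"
    using js by (intro arg_cong2[where f = "(*)"] sum.cong refl nn_integral_noise_fresh_leaf_dev_W)
  also have "\<dots> = (\<integral>\<^sup>+\<omega>. ennreal \<bar>W \<omega> - swapped_leaf 0 js \<omega>\<bar> \<partial>M)"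
    by (rule nn_integral_supersample_space[symmetric]) measurable
  finally show ?thesis .
qed

lemma popLoss_eq_enn2real: "popLoss n L \<theta> \<sigma> w = enn2real (fresh_leaf_dev w)"
proof -
  have "popLoss n L \<theta> \<sigma> w \<ge> 0" unfolding popLoss_def by (rule integral_nonneg_AE) auto
  then show ?thesis using popLoss_eq_fresh_leaf_dev[of w] by (metis enn2real_ennreal)
qed

lemma borel_measurable_popLoss_W[measurable]: "(\<lambda>\<omega>. popLoss n L \<theta> \<sigma> (W \<omega>)) \<in> borel_measurable M"
  unfolding popLoss_eq_enn2real by measurable

lemma integrable_abs_W_minus_leaf:
  "js \<in> idx n L \<Longrightarrow> integrable M (\<lambda>\<omega>. \<bar>W \<omega> - musel \<theta> \<sigma> \<omega> L js\<bar>)"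
  using integrable_abs_W_minus_swapped_leaf[of js L] by (simp add: swapped_leaf_L idx_def)

lemma integral_popLoss_W_le:
  assumes js: "js \<in> idx n L"
  shows "integrable M (\<lambda>\<omega>. popLoss n L \<theta> \<sigma> (W \<omega>))"
    and "(\<integral>\<omega>. popLoss n L \<theta> \<sigma> (W \<omega>) \<partial>M)
      \<le> (\<integral>\<omega>. \<bar>W \<omega> - musel \<theta> \<sigma> \<omega> L js\<bar> \<partial>M) + (\<Sum>m\<in>{1..L}. swap_cost m)"
proof -
  let ?e = "\<integral>\<omega>. \<bar>W \<omega> - musel \<theta> \<sigma> \<omega> L js\<bar> \<partial>M" and ?B = "\<Sum>m\<in>{1..L}. swap_cost m"
  have pop_nonneg: "popLoss n L \<theta> \<sigma> w \<ge> 0" for w by (simp add: popLoss_eq_enn2real)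
  have "(\<integral>\<^sup>+\<omega>. ennreal (popLoss n L \<theta> \<sigma> (W \<omega>)) \<partial>M) = (\<integral>\<^sup>+\<omega>. ennreal \<bar>W \<omega> - swapped_leaf 0 js \<omega>\<bar> \<partial>M)"
    by (simp add: popLoss_eq_fresh_leaf_dev nn_integral_fresh_leaf_dev_W[OF js])
  also have "\<dots> \<le> (\<integral>\<^sup>+\<omega>. ennreal \<bar>W \<omega> - swapped_leaf L js \<omega>\<bar> \<partial>M) + ennreal ?B"
    by (rule nn_integral_swapped_leaf_0_le[OF js order.refl])
  also have "\<dots> = ennreal (?e + ?B)"
    using integrable_abs_W_minus_leaf[OF js] js
    by (simp add: nn_integral_eq_integral swapped_leaf_L idx_def ennreal_plus sum_nonneg swap_cost_nonneg)
  finally have pop: "(\<integral>\<^sup>+\<omega>. ennreal (popLoss n L \<theta> \<sigma> (W \<omega>)) \<partial>M) \<le> ennreal (?e + ?B)" .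
  show int: "integrable M (\<lambda>\<omega>. popLoss n L \<theta> \<sigma> (W \<omega>))"
    using pop pop_nonneg by (intro integrableI_bounded) (auto intro: le_less_trans[OF _ ennreal_less_top])
  have "0 \<le> ?e + ?B" by (simp add: sum_nonneg swap_cost_nonneg)
  then show "(\<integral>\<omega>. popLoss n L \<theta> \<sigma> (W \<omega>) \<partial>M) \<le> ?e + ?B"
    using pop int pop_nonneg by (simp add: nn_integral_eq_integral)
qed

lemma integral_gap_le:
  "(\<integral>\<omega>. popLoss n L \<theta> \<sigma> (W \<omega>) - empLoss n L \<theta> \<sigma> (W \<omega>) \<omega> \<partial>M)
    \<le> 2 / sqrt pi * (\<Sum>l\<in>{1..L}. \<bar>\<sigma> l\<bar> / real (NN n l))"
proof -
  let ?e = "\<lambda>js. \<integral>\<omega>. \<bar>W \<omega> - musel \<theta> \<sigma> \<omega> L js\<bar> \<partial>M" and ?B = "\<Sum>m\<in>{1..L}. swap_cost m"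
  let ?p = "\<integral>\<omega>. popLoss n L \<theta> \<sigma> (W \<omega>) \<partial>M" and ?N = "real (NN n L)"
  obtain js0 where js0: "js0 \<in> idx n L"
    using card_idx[of n L] NN_L_pos by (metis card.empty ex_in_conv of_nat_0 less_irrefl)
  have emp_int: "integrable M (\<lambda>\<omega>. empLoss n L \<theta> \<sigma> (W \<omega>) \<omega>)"
    unfolding empLoss_def by (intro integrable_mult_right Bochner_Integration.integrable_sum integrable_abs_W_minus_leaf)
  have emp: "(\<integral>\<omega>. empLoss n L \<theta> \<sigma> (W \<omega>) \<omega> \<partial>M) = 1 / ?N * (\<Sum>js\<in>idx n L. ?e js)"
    unfolding empLoss_def by (simp add: Bochner_Integration.integral_sum integrable_abs_W_minus_leaf)
  have "?p = 1 / ?N * (\<Sum>js\<in>idx n L. ?p)"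
    using NN_L_pos by (simp add: card_idx)
  also have "\<dots> \<le> 1 / ?N * (\<Sum>js\<in>idx n L. ?e js + ?B)"
    using NN_L_pos integral_popLoss_W_le(2) by (intro mult_left_mono sum_mono) auto
  also have "\<dots> = (\<integral>\<omega>. empLoss n L \<theta> \<sigma> (W \<omega>) \<omega> \<partial>M) + ?B"
    using NN_L_pos by (simp add: emp sum.distrib card_idx distrib_left)
  also have "?B = 2 / sqrt pi * (\<Sum>l\<in>{1..L}. \<bar>\<sigma> l\<bar> / real (NN n l))"
    by (simp add: swap_cost_def sum_distrib_left)
  finally show ?thesis
    using integral_popLoss_W_le(1)[OF js0] emp_int by (simp add: Bochner_Integration.integral_diff)
qed

end

lemma level_average_sum_le:
  fixes I :: "nat \<Rightarrow> nat list \<Rightarrow> ennreal"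
  assumes n_pos: "\<And>k. k \<in> {1..L} \<Longrightarrow> n k \<ge> 1" and c: "c > 0" and b: "\<And>l. l \<in> {1..L} \<Longrightarrow> b l \<ge> 0"
    and I: "\<And>l is. l \<in> {1..L} \<Longrightarrow> is \<in> idx n l \<Longrightarrow> I l is \<le> ennreal (b l / (c * real (NN n l)))"
  shows "2 * (\<Sum>l\<in>{1..L}. ennreal (1 / real (NN n l)) * (\<Sum>is\<in>idx n l. I l is))
      \<le> ennreal (2 / c * (\<Sum>l\<in>{1..L}. b l / real (NN n l)))"
proof -
  have "ennreal (1 / real (NN n l)) * (\<Sum>is\<in>idx n l. I l is) \<le> ennreal (b l / (c * real (NN n l)))"
    if l: "l \<in> {1..L}" for l
  proof -
    have N: "real (NN n l) > 0" using NN_pos[of l n] n_pos l by auto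
    have "ennreal (1 / real (NN n l)) * (\<Sum>is\<in>idx n l. I l is)
        \<le> ennreal (1 / real (NN n l)) * (\<Sum>is\<in>idx n l. ennreal (b l / (c * real (NN n l))))"
      using I l by (intro mult_left_mono sum_mono) auto
    also have "\<dots> = ennreal (b l / (c * real (NN n l)))"
      using N c b[OF l] by (simp add: card_idx ennreal_of_nat_eq_real_of_nat ennreal_mult[symmetric])
    finally show ?thesis .
  qed
  then have "(\<Sum>l\<in>{1..L}. ennreal (1 / real (NN n l)) * (\<Sum>is\<in>idx n l. I l is))
      \<le> (\<Sum>l\<in>{1..L}. ennreal (b l / (c * real (NN n l))))"
    by (rule sum_mono)
  also have "\<dots> = ennreal (\<Sum>l\<in>{1..L}. b l / (c * real (NN n l)))"
    using b c by (intro sum_ennreal) simp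
  finally have "2 * (\<Sum>l\<in>{1..L}. ennreal (1 / real (NN n l)) * (\<Sum>is\<in>idx n l. I l is))
      \<le> 2 * ennreal (\<Sum>l\<in>{1..L}. b l / (c * real (NN n l)))"
    by (rule mult_left_mono) simp
  also have "\<dots> = ennreal (2 * (\<Sum>l\<in>{1..L}. b l / (c * real (NN n l))))"
    using b c by (intro numeral_mult_ennreal sum_nonneg) simp
  also have "2 * (\<Sum>l\<in>{1..L}. b l / (c * real (NN n l))) = 2 / c * (\<Sum>l\<in>{1..L}. b l / real (NN n l))"
    by (simp add: sum_distrib_left)
  finally show ?thesis .
qed

theorem mainTheorem10:
  fixes n :: "nat \<Rightarrow> nat" and L :: nat and \<theta> :: real and \<sigma> :: "nat \<Rightarrow> real"
  assumes L1: "L \<ge> 1"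
    and n_pos: "\<And>k. k \<in> {1..L} \<Longrightarrow> n k \<ge> 1"
    and \<sigma>_pos: "\<And>k. k \<in> {1..L} \<Longrightarrow> \<sigma> k > 0"
  shows
    "(\<forall>l\<in>{1..L}. \<forall>is\<in>idx n l. \<forall>\<kappa>1 \<kappa>2.
        is_cond_law (supersample_space n L) SXU (XU \<theta> \<sigma> l is) (hypW n L \<theta> \<sigma>) \<kappa>1 \<longrightarrow>
        is_cond_law (supersample_space n L) SXT (XT \<theta> \<sigma> l is) (hypW n L \<theta> \<sigma>) \<kappa>2 \<longrightarrow>
        (\<integral>\<^sup>+ x. wasserstein1 (\<kappa>1 x) (\<kappa>2 (fst x)) \<partial>(distr (supersample_space n L) SXU (XU \<theta> \<sigma> l is)))
          \<le> ennreal (\<sigma> l / (sqrt pi * real (NN n l))))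
   \<and> (\<forall>\<kappa>1 \<kappa>2.
        (\<forall>l\<in>{1..L}. \<forall>is\<in>idx n l.
           is_cond_law (supersample_space n L) SXU (XU \<theta> \<sigma> l is) (hypW n L \<theta> \<sigma>) (\<kappa>1 l is) \<and>
           is_cond_law (supersample_space n L) SXT (XT \<theta> \<sigma> l is) (hypW n L \<theta> \<sigma>) (\<kappa>2 l is)) \<longrightarrow>
        2 * (\<Sum>l\<in>{1..L}. ennreal (1 / real (NN n l)) *
               (\<Sum>is\<in>idx n l. \<integral>\<^sup>+ x. wasserstein1 (\<kappa>1 l is x) (\<kappa>2 l is (fst x))
                                 \<partial>(distr (supersample_space n L) SXU (XU \<theta> \<sigma> l is))))
          \<le> ennreal (2 / sqrt pi * (\<Sum>l\<in>{1..L}. \<sigma> l / real (NN n l))))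
   \<and> (\<integral> \<omega>. popLoss n L \<theta> \<sigma> (hypW n L \<theta> \<sigma> \<omega>) - empLoss n L \<theta> \<sigma> (hypW n L \<theta> \<sigma> \<omega>) \<omega>
          \<partial>(supersample_space n L))
       \<le> 2 / sqrt pi * (\<Sum>l\<in>{1..L}. \<sigma> l / real (NN n l))"
proof -
  have node_bound:
    "(\<integral>\<^sup>+x. wasserstein1 (\<kappa>1 x) (\<kappa>2 (fst x)) \<partial>distr (supersample_space n L) SXU (XU \<theta> \<sigma> l js))
      \<le> ennreal (\<sigma> l / (sqrt pi * real (NN n l)))"
    if "l \<in> {1..L}" "js \<in> idx n l"
      "is_cond_law (supersample_space n L) SXU (XU \<theta> \<sigma> l js) (hypW n L \<theta> \<sigma>) \<kappa>1"
      "is_cond_law (supersample_space n L) SXT (XT \<theta> \<sigma> l js) (hypW n L \<theta> \<sigma>) \<kappa>2"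
    for l js \<kappa>1 \<kappa>2
  proof -
    interpret supersample_node_cond_laws n L \<theta> \<sigma> l js \<kappa>1 \<kappa>2
      using that n_pos by unfold_locales auto
    show ?thesis using nn_integral_wasserstein1_le \<sigma>_pos[OF that(1)] by simp
  qed
  interpret supersample_tree n L \<theta> \<sigma>
    using L1 n_pos by unfold_locales
  have "(\<Sum>l\<in>{1..L}. \<bar>\<sigma> l\<bar> / real (NN n l)) = (\<Sum>l\<in>{1..L}. \<sigma> l / real (NN n l))"
    using \<sigma>_pos by (intro sum.cong) (auto simp: abs_of_pos)
  then show ?thesis
    using node_bound integral_gap_le \<sigma>_pos
    by (intro conjI allI impI ballI level_average_sum_le[OF n_pos]) (auto simp: less_imp_le)
qed

end
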